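(* Let $(x,y,p)$ be an optimal solution of the RMP with optimal value $z^{\mathit{RMP}}$ and let $(\alpha,\beta,\gamma,\delta,\mu,\phi,\psi)$ be an optimal solution of the DRMP, with characteristic lifting $(\alpha,\check\beta,\gamma,\check\delta,\mu,\phi,\psi)$. Define $$\bar c^*_b:=-\Bigl(\min_{l\in L(b),\,m\in\mathcal M}\bar c_{b,l,m}\Bigr)^-\le 0\quad(b\in\mathcal B),$$ $$\bar d^*:=-\Bigl(\min_{l\in\mathcal L\setminus\bigcap_{b\in\mathcal B}L(b)}\Bigl(-\sum_{b\in\mathcal B}\check\beta_{b,l}+\check\delta_l+\gamma-\chi_l\mu\Bigr)\Bigr)^-\le 0$$ (with $\bar d^*:=0$ if the index set is empty, and with the convention that a minimum over an empty set is $+\infty$), and the lower-bound shift $\tilde\alpha_b:=\alpha_b+\bar c^*_b$, $\tilde\beta:=\check\beta$, $\tilde\gamma:=\gamma-\bar d^*$, $\tilde\delta:=\check\delta$, $\tilde\mu:=\mu$, $\tilde\phi:=\phi$, $\tilde\psi:=\psi$. Then $(\tilde\alpha,\tilde\beta,\tilde\gamma,\tilde\delta,\tilde\mu,\tilde\phi,\tilde\psi)$ is feasible for the DMP, and its DMP objective value equals $z^{\mathit{RMP}}+\sum_{b\in\mathcal B}\bar c^*_b+k\bar d^*$. Consequently the optimal value $z^{\mathit{MP}}$ of the MP satisfies $$z^{\mathit{MP}}\ \ge\ z^{\mathit{RMP}}+\sum_{b\in\mathcal B}\bar c^*_b+k\,\bar d^*.$$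
   Context: Let $\mathcal B$ (branches) and $\mathcal S$ (sizes) be finite nonempty sets, $\mathcal M\subset\mathbb N$ a finite nonempty set of multiplicities, and $\mathcal L\subset\mathbb N^{\mathcal S}$ a finite nonempty set of lot-types; for $l\in\mathcal L$ write $|l|:=\sum_{s\in\mathcal S}l_s$. Let costs $c_{b,l,m}\ge 0$ ($b\in\mathcal B,l\in\mathcal L,m\in\mathcal M$), an integer $k\ge 0$, reals $\underline I\le\overline I$ and a constant $P>0$ be given. Let $\mathcal L''\subseteq\mathcal L'\subseteq\mathcal L$, for each $b\in\mathcal B$ let $L(b)\subseteq\mathcal L'$, and for each $b$ and $l\in L(b)$ let $M(b,l)\subseteq\mathcal M$ be nonempty. Put $\chi_l:=1$ if $l\notin\mathcal L''$ and $\chi_l:=0$ if $l\in\mathcal L''$. For real $t$, $(t)^+:=\max\{t,0\}$ and $(t)^-:=\max\{-t,0\}$. Master problem (MP): the linear program in variables $x_{b,l,m}\ge0$ ($b\in\mathcal B,l\in\mathcal L,m\in\mathcal M$), $y_l\ge0$ ($l\in\mathcal L$), $p\ge 0$: minimize $\sum_{b,l,m}c_{b,l,m}x_{b,l,m}+Pp$ subject to ($\alpha_b$) $\sum_{l,m}x_{b,l,m}=1$ for all $b$; ($\beta_{b,l}$) $y_l-\sum_m x_{b,l,m}\ge 0$ for all $b,l$; ($\gamma$) $-\sum_l y_l\ge -k$; ($\delta_l$) $\sum_{b,m}x_{b,l,m}-y_l\ge0$ for all $l$; ($\mu$) $\sum_{l\in\mathcal L\setminus\mathcal L''}y_l+p\ge1$;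 ($\phi$) $\sum_{b,l,m}m|l|x_{b,l,m}\ge\underline I$; ($\psi$) $-\sum_{b,l,m}m|l|x_{b,l,m}\ge-\overline I$. The symbol in parentheses names the dual variable of each constraint. Restricted master problem (RMP): the same LP but containing only the variables $x_{b,l,m}$ with $l\in L(b)$, $m\in M(b,l)$, the variables $y_l$ with $l\in\mathcal L'$, and $p$; only the $\beta_{b,l}$-constraints with $l\in L(b)$ and the $\delta_l$-constraints with $l\in\mathcal L'$ are kept, and all sums are restricted to the present variables. Dual master problem (DMP): variables $\alpha_b\in\mathbb R$, $\beta_{b,l}\ge0$ (all $b\in\mathcal B,l\in\mathcal L$), $\gamma\ge0$, $\delta_l\ge0$ (all $l\in\mathcal L$), $\mu\ge0$, $\phi,\psi\ge0$; maximize $\sum_b\alpha_b-k\gamma+\underline I\phi-\overline I\psi+\mu$ subject to the $x$-constraints $\alpha_b-\beta_{b,l}+\delta_l+m|l|(\phi-\psi)\le c_{b,l,m}$ for all $b,l,m$, the $y$-constraints $\sum_{b\in\mathcal B}\beta_{b,l}-\gamma-\delta_l+\chi_l\mu\le 0$ for all $l\in\mathcal L$, and the $p$-constraint $\mu\le P$. The dual restricted master problem (DRMP) is the LP dual of the RMP: variables $\alpha_b$, $\beta_{b,l}$ ($l\in L(b)$), $\gamma$, $\delta_l$ ($l\in\mathcal L'$), $\mu,\phi,\psi$ with the same sign conditions and objective, $x$-constraints only for $l\in L(b)$, $m\in M(b,l)$, $y$-constraints $\sum_{b:\,l\in L(b)}\beta_{b,l}-\gamma-\delta_l+\chi_l\mu\le0$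 for $l\in\mathcal L'$, and $\mu\le P$. Given a DRMP solution $(\alpha,\beta,\gamma,\delta,\mu,\phi,\psi)$: its canonical lifting sets $\bar\beta_{b,l}:=\beta_{b,l}$ if $l\in L(b)$ and $0$ otherwise, $\bar\delta_l:=\delta_l$ if $l\in\mathcal L'$ and $0$ otherwise. The (uncompensated) reduced cost is $\bar c_{b,l,m}:=c_{b,l,m}-\alpha_b+\bar\beta_{b,l}-\bar\delta_l-m|l|(\phi-\psi)$ for all $b\in\mathcal B,l\in\mathcal L,m\in\mathcal M$. The characteristic lifting is $(\alpha,\check\beta,\gamma,\check\delta,\mu,\phi,\psi)$ with $\check\beta_{b,l}:=\beta_{b,l}$ if $l\in L(b)$ and $\check\beta_{b,l}:=(\min_{m\in\mathcal M}\bar c_{b,l,m})^-$ if $l\in\mathcal L\setminus L(b)$; $\check\delta_l:=\delta_l$ if $l\in\mathcal L'$ and $\check\delta_l:=(\min_{b\in\mathcal B,m\in\mathcal M}\bar c_{b,l,m})^+$ if $l\in\mathcal L\setminus\mathcal L'$. *)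

theory Defs
  imports Complex_Main
begin

text \<open>Lot-types are elements of nat^S, represented as functions 's => nat
  (assumed zero outside S). Notation: B branches, S sizes, Ms multiplicities,
  Ls lot-types, L1 = L', L2 = L'', Lb b = L(b), Mb b l = M(b,l).\<close>

definition lsize :: "'s set \<Rightarrow> ('s \<Rightarrow> nat) \<Rightarrow> real" where
  "lsize S l = real (\<Sum>s\<in>S. l s)"

definition chi :: "('s \<Rightarrow> nat) set \<Rightarrow> ('s \<Rightarrow> nat) \<Rightarrow> real" where
  "chi L2 l = (if l \<in> L2 then 0 else 1)"

definition pos_part :: "real \<Rightarrow> real" where "pos_part t = max t 0"
definition neg_part :: "real \<Rightarrow> real" where "neg_part t = max (- t) 0"

definition mp_feasible ::
  "'b set \<Rightarrow> 's set \<Rightarrow> nat set \<Rightarrow> ('s \<Rightarrow> nat) set \<Rightarrow> ('s \<Rightarrow> nat) set \<Rightarrow> nat \<Rightarrow> real \<Rightarrow> real \<Rightarrow>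
   ('b \<Rightarrow> ('s \<Rightarrow> nat) \<Rightarrow> nat \<Rightarrow> real) \<Rightarrow> (('s \<Rightarrow> nat) \<Rightarrow> real) \<Rightarrow> real \<Rightarrow> bool" where
  "mp_feasible B S Ms Ls L2 k Ilo Ihi x y p \<longleftrightarrow>
     (\<forall>b\<in>B. \<forall>l\<in>Ls. \<forall>m\<in>Ms. x b l m \<ge> 0) \<and> (\<forall>l\<in>Ls. y l \<ge> 0) \<and> p \<ge> 0 \<and>
     (\<forall>b\<in>B. (\<Sum>l\<in>Ls. \<Sum>m\<in>Ms. x b l m) = 1) \<and>
     (\<forall>b\<in>B. \<forall>l\<in>Ls. y l - (\<Sum>m\<in>Ms. x b l m) \<ge> 0) \<and>
     - (\<Sum>l\<in>Ls. y l) \<ge> - real k \<and>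
     (\<forall>l\<in>Ls. (\<Sum>b\<in>B. \<Sum>m\<in>Ms. x b l m) - y l \<ge> 0) \<and>
     (\<Sum>l\<in>Ls - L2. y l) + p \<ge> 1 \<and>
     (\<Sum>b\<in>B. \<Sum>l\<in>Ls. \<Sum>m\<in>Ms. real m * lsize S l * x b l m) \<ge> Ilo \<and>
     - (\<Sum>b\<in>B. \<Sum>l\<in>Ls. \<Sum>m\<in>Ms. real m * lsize S l * x b l m) \<ge> - Ihi"

definition mp_obj ::
  "'b set \<Rightarrow> nat set \<Rightarrow> ('s \<Rightarrow> nat) set \<Rightarrow> ('b \<Rightarrow> ('s \<Rightarrow> nat) \<Rightarrow> nat \<Rightarrow> real) \<Rightarrow> real \<Rightarrow>
   ('b \<Rightarrow> ('s \<Rightarrow> nat) \<Rightarrow> nat \<Rightarrow> real) \<Rightarrow> (('s \<Rightarrow> nat) \<Rightarrow> real) \<Rightarrow> real \<Rightarrow> real" where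
  "mp_obj B Ms Ls c P x y p = (\<Sum>b\<in>B. \<Sum>l\<in>Ls. \<Sum>m\<in>Ms. c b l m * x b l m) + P * p"

definition mp_value ::
  "'b set \<Rightarrow> 's set \<Rightarrow> nat set \<Rightarrow> ('s \<Rightarrow> nat) set \<Rightarrow> ('s \<Rightarrow> nat) set \<Rightarrow>
   ('b \<Rightarrow> ('s \<Rightarrow> nat) \<Rightarrow> nat \<Rightarrow> real) \<Rightarrow> nat \<Rightarrow> real \<Rightarrow> real \<Rightarrow> real \<Rightarrow> real" where
  "mp_value B S Ms Ls L2 c k Ilo Ihi P =
     Inf {mp_obj B Ms Ls c P x y p | x y p. mp_feasible B S Ms Ls L2 k Ilo Ihi x y p}"

definition rmp_feasible ::
  "'b set \<Rightarrow> 's set \<Rightarrow> ('s \<Rightarrow> nat) set \<Rightarrow> ('s \<Rightarrow> nat) set \<Rightarrow> ('b \<Rightarrow> ('s \<Rightarrow> nat) set) \<Rightarrow>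
   ('b \<Rightarrow> ('s \<Rightarrow> nat) \<Rightarrow> nat set) \<Rightarrow> nat \<Rightarrow> real \<Rightarrow> real \<Rightarrow>
   ('b \<Rightarrow> ('s \<Rightarrow> nat) \<Rightarrow> nat \<Rightarrow> real) \<Rightarrow> (('s \<Rightarrow> nat) \<Rightarrow> real) \<Rightarrow> real \<Rightarrow> bool" where
  "rmp_feasible B S L1 L2 Lb Mb k Ilo Ihi x y p \<longleftrightarrow>
     (\<forall>b\<in>B. \<forall>l\<in>Lb b. \<forall>m\<in>Mb b l. x b l m \<ge> 0) \<and> (\<forall>l\<in>L1. y l \<ge> 0) \<and> p \<ge> 0 \<and>
     (\<forall>b\<in>B. (\<Sum>l\<in>Lb b. \<Sum>m\<in>Mb b l. x b l m) = 1) \<and>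
     (\<forall>b\<in>B. \<forall>l\<in>Lb b. y l - (\<Sum>m\<in>Mb b l. x b l m) \<ge> 0) \<and>
     - (\<Sum>l\<in>L1. y l) \<ge> - real k \<and>
     (\<forall>l\<in>L1. (\<Sum>b\<in>{b\<in>B. l \<in> Lb b}. \<Sum>m\<in>Mb b l. x b l m) - y l \<ge> 0) \<and>
     (\<Sum>l\<in>L1 - L2. y l) + p \<ge> 1 \<and>
     (\<Sum>b\<in>B. \<Sum>l\<in>Lb b. \<Sum>m\<in>Mb b l. real m * lsize S l * x b l m) \<ge> Ilo \<and>
     - (\<Sum>b\<in>B. \<Sum>l\<in>Lb b. \<Sum>m\<in>Mb b l. real m * lsize S l * x b l m) \<ge> - Ihi"

definition rmp_obj ::
  "'b set \<Rightarrow> ('b \<Rightarrow> ('s \<Rightarrow> nat) set) \<Rightarrow> ('b \<Rightarrow> ('s \<Rightarrow> nat) \<Rightarrow> nat set) \<Rightarrow>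
   ('b \<Rightarrow> ('s \<Rightarrow> nat) \<Rightarrow> nat \<Rightarrow> real) \<Rightarrow> real \<Rightarrow>
   ('b \<Rightarrow> ('s \<Rightarrow> nat) \<Rightarrow> nat \<Rightarrow> real) \<Rightarrow> (('s \<Rightarrow> nat) \<Rightarrow> real) \<Rightarrow> real \<Rightarrow> real" where
  "rmp_obj B Lb Mb c P x y p = (\<Sum>b\<in>B. \<Sum>l\<in>Lb b. \<Sum>m\<in>Mb b l. c b l m * x b l m) + P * p"

definition rmp_optimal where
  "rmp_optimal B S L1 L2 Lb Mb c k Ilo Ihi P x y p \<longleftrightarrow>
     rmp_feasible B S L1 L2 Lb Mb k Ilo Ihi x y p \<and>
     (\<forall>x' y' p'. rmp_feasible B S L1 L2 Lb Mb k Ilo Ihi x' y' p' \<longrightarrow>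
        rmp_obj B Lb Mb c P x y p \<le> rmp_obj B Lb Mb c P x' y' p')"

definition dmp_obj ::
  "'b set \<Rightarrow> nat \<Rightarrow> real \<Rightarrow> real \<Rightarrow> ('b \<Rightarrow> real) \<Rightarrow> real \<Rightarrow> real \<Rightarrow> real \<Rightarrow> real \<Rightarrow> real" where
  "dmp_obj B k Ilo Ihi al ga mu ph ps =
     (\<Sum>b\<in>B. al b) - real k * ga + Ilo * ph - Ihi * ps + mu"

definition dmp_feasible ::
  "'b set \<Rightarrow> 's set \<Rightarrow> nat set \<Rightarrow> ('s \<Rightarrow> nat) set \<Rightarrow> ('s \<Rightarrow> nat) set \<Rightarrow>
   ('b \<Rightarrow> ('s \<Rightarrow> nat) \<Rightarrow> nat \<Rightarrow> real) \<Rightarrow> real \<Rightarrow>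
   ('b \<Rightarrow> real) \<Rightarrow> ('b \<Rightarrow> ('s \<Rightarrow> nat) \<Rightarrow> real) \<Rightarrow> real \<Rightarrow> (('s \<Rightarrow> nat) \<Rightarrow> real) \<Rightarrow>
   real \<Rightarrow> real \<Rightarrow> real \<Rightarrow> bool" where
  "dmp_feasible B S Ms Ls L2 c P al be ga de mu ph ps \<longleftrightarrow>
     (\<forall>b\<in>B. \<forall>l\<in>Ls. be b l \<ge> 0) \<and> ga \<ge> 0 \<and> (\<forall>l\<in>Ls. de l \<ge> 0) \<and>
     mu \<ge> 0 \<and> ph \<ge> 0 \<and> ps \<ge> 0 \<and>
     (\<forall>b\<in>B. \<forall>l\<in>Ls. \<forall>m\<in>Ms.
        al b - be b l + de l + real m * lsize S l * (ph - ps) \<le> c b l m) \<and>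
     (\<forall>l\<in>Ls. (\<Sum>b\<in>B. be b l) - ga - de l + chi L2 l * mu \<le> 0) \<and>
     mu \<le> P"

definition drmp_feasible ::
  "'b set \<Rightarrow> 's set \<Rightarrow> ('s \<Rightarrow> nat) set \<Rightarrow> ('s \<Rightarrow> nat) set \<Rightarrow> ('b \<Rightarrow> ('s \<Rightarrow> nat) set) \<Rightarrow>
   ('b \<Rightarrow> ('s \<Rightarrow> nat) \<Rightarrow> nat set) \<Rightarrow> ('b \<Rightarrow> ('s \<Rightarrow> nat) \<Rightarrow> nat \<Rightarrow> real) \<Rightarrow> real \<Rightarrow>
   ('b \<Rightarrow> real) \<Rightarrow> ('b \<Rightarrow> ('s \<Rightarrow> nat) \<Rightarrow> real) \<Rightarrow> real \<Rightarrow> (('s \<Rightarrow> nat) \<Rightarrow> real) \<Rightarrow>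
   real \<Rightarrow> real \<Rightarrow> real \<Rightarrow> bool" where
  "drmp_feasible B S L1 L2 Lb Mb c P al be ga de mu ph ps \<longleftrightarrow>
     (\<forall>b\<in>B. \<forall>l\<in>Lb b. be b l \<ge> 0) \<and> ga \<ge> 0 \<and> (\<forall>l\<in>L1. de l \<ge> 0) \<and>
     mu \<ge> 0 \<and> ph \<ge> 0 \<and> ps \<ge> 0 \<and>
     (\<forall>b\<in>B. \<forall>l\<in>Lb b. \<forall>m\<in>Mb b l.
        al b - be b l + de l + real m * lsize S l * (ph - ps) \<le> c b l m) \<and>
     (\<forall>l\<in>L1. (\<Sum>b\<in>{b\<in>B. l \<in> Lb b}. be b l) - ga - de l + chi L2 l * mu \<le> 0) \<and>
     mu \<le> P"

definition drmp_optimal where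
  "drmp_optimal B S L1 L2 Lb Mb c k Ilo Ihi P al be ga de mu ph ps \<longleftrightarrow>
     drmp_feasible B S L1 L2 Lb Mb c P al be ga de mu ph ps \<and>
     (\<forall>al' be' ga' de' mu' ph' ps'.
        drmp_feasible B S L1 L2 Lb Mb c P al' be' ga' de' mu' ph' ps' \<longrightarrow>
        dmp_obj B k Ilo Ihi al' ga' mu' ph' ps' \<le> dmp_obj B k Ilo Ihi al ga mu ph ps)"

definition beta_bar where
  "beta_bar Lb be b l = (if l \<in> Lb b then be b l else 0)"

definition delta_bar where
  "delta_bar L1 de l = (if l \<in> L1 then de l else 0)"

definition cbar where
  "cbar S L1 Lb c al be de ph ps b l m =
     c b l m - al b + beta_bar Lb be b l - delta_bar L1 de l - real m * lsize S l * (ph - ps)"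

definition beta_check where
  "beta_check S Ms L1 Lb c al be de ph ps b l =
     (if l \<in> Lb b then be b l
      else neg_part (Min ((\<lambda>m. cbar S L1 Lb c al be de ph ps b l m) ` Ms)))"

definition delta_check where
  "delta_check B S Ms L1 Lb c al be de ph ps l =
     (if l \<in> L1 then de l
      else pos_part (Min {cbar S L1 Lb c al be de ph ps b l m | b m. b \<in> B \<and> m \<in> Ms}))"

definition cstar where
  "cstar S Ms L1 Lb c al be de ph ps b =
     (if Lb b = {} then 0
      else - neg_part (Min {cbar S L1 Lb c al be de ph ps b l m | l m. l \<in> Lb b \<and> m \<in> Ms}))"

definition dstar where
  "dstar B S Ms Ls L1 L2 Lb c al be ga de mu ph ps =
     (let D = Ls - (\<Inter>b\<in>B. Lb b) in
      if D = {} then 0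
      else - neg_part (Min ((\<lambda>l. - (\<Sum>b\<in>B. beta_check S Ms L1 Lb c al be de ph ps b l)
                                 + delta_check B S Ms L1 Lb c al be de ph ps l + ga - chi L2 l * mu) ` D)))"

end

theory Submission
  imports Defs
begin

text \<open>The RMP and the DRMP are a primal-dual pair of linear programs, so by LP duality (Farkas'
  lemma, obtained here by Fourier-Motzkin elimination) the DRMP optimum equals the RMP optimum.
  In the characteristic lifting, the variables beta and delta of missing columns and lot-types
  absorb the negative and positive parts of the reduced costs; what remains violated is repaired by
  lowering each alpha_b by the magnitude of the most negative reduced cost of branch b, and raising
  gamma by that of the most negative reduced cost of a y-variable. The shifted point is DMP-feasible, its objective differs
  from the DRMP optimum by the sum of the shifts, and weak duality between MP and DMP turns it
  into a lower bound on the MP optimum.\<close>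

section \<open>Farkas' lemma by Fourier-Motzkin elimination\<close>

text \<open>A pair (a, r) stands for the inequality \<open>\<Sum>v. a v * z v \<le> r\<close>; nonneg_comb C consists of
  the nonnegative combinations of the inequalities in C.\<close>
inductive nonneg_comb :: "(('v \<Rightarrow> real) \<times> real) set \<Rightarrow> ('v \<Rightarrow> real) \<times> real \<Rightarrow> bool"
  for C where
  member: "c \<in> C \<Longrightarrow> nonneg_comb C c"
| scale: "nonneg_comb C (a, r) \<Longrightarrow> t \<ge> 0 \<Longrightarrow> nonneg_comb C (\<lambda>v. t * a v, t * r)"
| add: "nonneg_comb C (a1, r1) \<Longrightarrow> nonneg_comb C (a2, r2) \<Longrightarrow>
        nonneg_comb C (\<lambda>v. a1 v + a2 v, r1 + r2)"

lemma nonneg_comb_trans: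
  assumes "nonneg_comb C' d" "\<forall>c\<in>C'. nonneg_comb C c"
  shows "nonneg_comb C d"
  using assms by (induction rule: nonneg_comb.induct) (auto intro: nonneg_comb.intros)

lemma nonneg_comb_multipliers:
  assumes "nonneg_comb C d" "finite C"
  shows "\<exists>lam. (\<forall>c\<in>C. lam c \<ge> 0) \<and> (\<forall>v. fst d v = (\<Sum>c\<in>C. lam c * fst c v))
              \<and> snd d = (\<Sum>c\<in>C. lam c * snd c)"
  using assms
proof (induction rule: nonneg_comb.induct)
  case (member c)
  have "(\<Sum>c'\<in>C. (if c' = c then 1 else 0) * f c') = f c" for f :: "_ \<Rightarrow> real"
    using member by (simp add: if_distrib[of "\<lambda>x. x * _"] cong: if_cong)
  then show ?case by (intro exI[of _ "\<lambda>c'. if c' = c then 1 else 0"]) auto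
next
  case (scale a r t)
  then obtain lam where "\<forall>c\<in>C. lam c \<ge> 0" "\<forall>v. a v = (\<Sum>c\<in>C. lam c * fst c v)"
    "r = (\<Sum>c\<in>C. lam c * snd c)" by auto
  with scale show ?case
    by (intro exI[of _ "\<lambda>c. t * lam c"]) (auto simp: sum_distrib_left mult.assoc)
next
  case (add a1 r1 a2 r2)
  then obtain l1 l2 where "\<forall>c\<in>C. l1 c \<ge> 0" "\<forall>v. a1 v = (\<Sum>c\<in>C. l1 c * fst c v)"
    "r1 = (\<Sum>c\<in>C. l1 c * snd c)" "\<forall>c\<in>C. l2 c \<ge> 0" "\<forall>v. a2 v = (\<Sum>c\<in>C. l2 c * fst c v)"
    "r2 = (\<Sum>c\<in>C. l2 c * snd c)" by auto
  then show ?case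
    by (intro exI[of _ "\<lambda>c. l1 c + l2 c"]) (auto simp: sum.distrib distrib_right)
qed

definition ineq_sat :: "'v set \<Rightarrow> (('v \<Rightarrow> real) \<times> real) set \<Rightarrow> ('v \<Rightarrow> real) \<Rightarrow> bool" where
  "ineq_sat V C z \<longleftrightarrow> (\<forall>c\<in>C. (\<Sum>v\<in>V. fst c v * z v) \<le> snd c)"

lemma exists_between_finite:
  fixes L U :: "'c \<Rightarrow> real"
  assumes "finite P" "finite N" "\<forall>p\<in>P. \<forall>n\<in>N. L n \<le> U p"
  shows "\<exists>t. (\<forall>p\<in>P. t \<le> U p) \<and> (\<forall>n\<in>N. L n \<le> t)"
proof (cases "N = {}")
  case True
  then show ?thesis using assms by (intro exI[of _ "if P = {} then 0 else Min (U ` P)"]) auto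
next
  case False
  then show ?thesis using assms by (intro exI[of _ "Max (L ` N)"]) (auto simp: Max_le_iff)
qed

definition fm_combine :: "'v \<Rightarrow> ('v \<Rightarrow> real) \<times> real \<Rightarrow> ('v \<Rightarrow> real) \<times> real \<Rightarrow> ('v \<Rightarrow> real) \<times> real" where
  "fm_combine v0 c d =
     (\<lambda>v. (- fst d v0) * fst c v + fst c v0 * fst d v, (- fst d v0) * snd c + fst c v0 * snd d)"

definition fm_eliminate :: "'v \<Rightarrow> (('v \<Rightarrow> real) \<times> real) set \<Rightarrow> (('v \<Rightarrow> real) \<times> real) set" where
  "fm_eliminate v0 C = {c\<in>C. fst c v0 = 0} \<union>
     (\<lambda>(c, d). fm_combine v0 c d) ` ({c\<in>C. fst c v0 > 0} \<times> {d\<in>C. fst d v0 < 0})"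

lemma finite_fm_eliminate: "finite C \<Longrightarrow> finite (fm_eliminate v0 C)"
  unfolding fm_eliminate_def by auto

lemma fm_eliminate_support:
  assumes "\<forall>c\<in>C. \<forall>v. v \<notin> insert v0 V \<longrightarrow> fst c v = 0" "c \<in> fm_eliminate v0 C" "v \<notin> V"
  shows "fst c v = 0"
proof (cases "v = v0")
  case True
  with assms(2) show ?thesis unfolding fm_eliminate_def fm_combine_def by (auto simp: algebra_simps)
next
  case False
  with assms(1,3) have "\<forall>c\<in>C. fst c v = 0" by auto
  with assms(2) show ?thesis unfolding fm_eliminate_def fm_combine_def
    by (auto; metis fst_conv mult_zero_left mult_zero_right)
qed

lemma fm_eliminate_nonneg_comb:
  assumes "c \<in> fm_eliminate v0 C"
  shows "nonneg_comb C c"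
  using assms unfolding fm_eliminate_def
proof (elim UnE imageE)
  fix pn assume pn: "pn \<in> {c\<in>C. fst c v0 > 0} \<times> {d\<in>C. fst d v0 < 0}"
    and c: "c = (case pn of (c, d) \<Rightarrow> fm_combine v0 c d)"
  obtain p n where pn_eq: "pn = (p, n)" and "p \<in> C" "n \<in> C" "fst p v0 > 0" "fst n v0 < 0"
    using pn by auto
  have comb_p: "nonneg_comb C (fst p, snd p)" and comb_n: "nonneg_comb C (fst n, snd n)"
    using \<open>p \<in> C\<close> \<open>n \<in> C\<close> by (simp_all add: nonneg_comb.member)
  have "nonneg_comb C (\<lambda>v. (- fst n v0) * fst p v, (- fst n v0) * snd p)"
    by (rule nonneg_comb.scale[OF comb_p]) (use \<open>fst n v0 < 0\<close> in auto)
  moreover have "nonneg_comb C (\<lambda>v. fst p v0 * fst n v, fst p v0 * snd n)"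
    by (rule nonneg_comb.scale[OF comb_n]) (use \<open>fst p v0 > 0\<close> in auto)
  ultimately have "nonneg_comb C (fm_combine v0 p n)"
    unfolding fm_combine_def by (rule nonneg_comb.add)
  then show "nonneg_comb C c"
    unfolding c pn_eq by simp
qed (auto intro: nonneg_comb.member)

lemma fm_eliminate_bounds_ordered:
  assumes sat: "ineq_sat V (fm_eliminate v0 C) z"
    and c: "c \<in> C" "fst c v0 > 0" and d: "d \<in> C" "fst d v0 < 0"
  shows "(snd d - (\<Sum>v\<in>V. fst d v * z v)) / fst d v0 \<le> (snd c - (\<Sum>v\<in>V. fst c v * z v)) / fst c v0"
proof -
  define s where "s e = (\<Sum>v\<in>V. fst e v * z v)" for e :: "('a \<Rightarrow> real) \<times> real"
  have "s (fm_combine v0 c d) = (- fst d v0) * s c + fst c v0 * s d"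
    unfolding s_def fm_combine_def sum_distrib_left sum_negf[symmetric] sum.distrib[symmetric]
    by (rule sum.cong) (auto simp: algebra_simps)
  moreover have "fm_combine v0 c d \<in> fm_eliminate v0 C"
    using c d unfolding fm_eliminate_def by auto
  then have "s (fm_combine v0 c d) \<le> snd (fm_combine v0 c d)"
    using sat unfolding ineq_sat_def s_def by blast
  ultimately have "(- fst d v0) * s c + fst c v0 * s d \<le> (- fst d v0) * snd c + fst c v0 * snd d"
    by (simp add: fm_combine_def)
  with c(2) d(2) show ?thesis unfolding s_def[symmetric] by (simp add: divide_simps) argo
qed

text \<open>The bounds on the eliminated coordinate that the original system imposes are ordered, so
  a value between them extends a solution of the eliminated system.\<close>
lemma fm_eliminate_extend:
  assumes "finite C" "finite V" "v0 \<notin> V" and sat: "ineq_sat V (fm_eliminate v0 C) z"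
  shows "\<exists>z'. ineq_sat (insert v0 V) C z'"
proof -
  define P where "P = {c\<in>C. fst c v0 > 0}"
  define N where "N = {c\<in>C. fst c v0 < 0}"
  define s where "s c = (\<Sum>v\<in>V. fst c v * z v)" for c :: "('a \<Rightarrow> real) \<times> real"
  have "finite P" "finite N" unfolding P_def N_def using assms(1) by auto
  then obtain t where t: "\<forall>c\<in>P. t \<le> (snd c - s c) / fst c v0"
    "\<forall>d\<in>N. (snd d - s d) / fst d v0 \<le> t"
    using exists_between_finite[of P N "\<lambda>d. (snd d - s d) / fst d v0" "\<lambda>c. (snd c - s c) / fst c v0"]
      fm_eliminate_bounds_ordered[OF sat] unfolding P_def N_def s_def by blast
  have sum_upd: "(\<Sum>v\<in>insert v0 V. fst c v * (z(v0 := t)) v) = fst c v0 * t + s c" for c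
  proof -
    have "(\<Sum>v\<in>V. fst c v * (z(v0 := t)) v) = s c"
      unfolding s_def using assms(3) by (intro sum.cong) auto
    then show ?thesis using assms(2,3) by simp
  qed
  have "(\<Sum>v\<in>insert v0 V. fst c v * (z(v0 := t)) v) \<le> snd c" if "c \<in> C" for c
  proof -
    consider "c \<in> P" | "c \<in> N" | "fst c v0 = 0" unfolding P_def N_def using \<open>c \<in> C\<close> by fastforce
    then show ?thesis
    proof cases
      case 1
      then have "fst c v0 > 0" "t \<le> (snd c - s c) / fst c v0" using t(1) unfolding P_def by blast+
      then show ?thesis unfolding sum_upd by (simp add: le_divide_eq algebra_simps)
    next
      case 2
      then have "fst c v0 < 0" "(snd c - s c) / fst c v0 \<le> t" using t(2) unfolding N_def by blast+
      then show ?thesis unfolding sum_upd by (simp add: divide_le_eq algebra_simps)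
    next
      case 3
      then show ?thesis using sat \<open>c \<in> C\<close> unfolding sum_upd ineq_sat_def s_def fm_eliminate_def by auto
    qed
  qed
  then show ?thesis unfolding ineq_sat_def by blast
qed

lemma fourier_motzkin:
  assumes "finite V" "finite C" "\<forall>c\<in>C. \<forall>v. v \<notin> V \<longrightarrow> fst c v = 0" "\<nexists>z. ineq_sat V C z"
  shows "\<exists>r<0. nonneg_comb C (\<lambda>_. 0, r)"
  using assms
proof (induction V arbitrary: C rule: finite_induct)
  case empty
  then obtain c where c: "c \<in> C" "snd c < 0" by (force simp: ineq_sat_def)
  with empty.prems(2) have "fst c = (\<lambda>_. 0)" by auto
  then have "c = (\<lambda>_. 0, snd c)" by (metis prod.collapse)
  with c show ?case by (metis nonneg_comb.member)
next
  case (insert v0 V)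
  have "\<nexists>z. ineq_sat V (fm_eliminate v0 C) z"
    using fm_eliminate_extend[OF insert.prems(1) insert.hyps(1,2)] insert.prems(3) by blast
  moreover have "\<forall>c\<in>fm_eliminate v0 C. \<forall>v. v \<notin> V \<longrightarrow> fst c v = 0"
    using fm_eliminate_support[OF insert.prems(2)] by blast
  ultimately obtain r where "r < 0" "nonneg_comb (fm_eliminate v0 C) (\<lambda>_. 0, r)"
    using insert.IH[OF finite_fm_eliminate[OF insert.prems(1)]] by blast
  moreover have "\<forall>c\<in>fm_eliminate v0 C. nonneg_comb C c"
    by (simp add: fm_eliminate_nonneg_comb)
  ultimately show ?case using nonneg_comb_trans by blast
qed

definition linear_in_coords :: "'v set \<Rightarrow> (('v \<Rightarrow> real) \<Rightarrow> real) \<Rightarrow> bool" where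
  "linear_in_coords V f \<longleftrightarrow> (\<exists>a. \<forall>z. f z = (\<Sum>v\<in>V. a v * z v))"

lemma linear_in_coords_coord: "finite V \<Longrightarrow> v \<in> V \<Longrightarrow> linear_in_coords V (\<lambda>z. z v)"
  unfolding linear_in_coords_def
  by (intro exI[of _ "\<lambda>u. if u = v then 1 else 0"]) (simp add: if_distrib[of "\<lambda>x. x * _"] cong: if_cong)

lemma linear_in_coords_const0: "linear_in_coords V (\<lambda>z. 0)"
  unfolding linear_in_coords_def by (intro exI[of _ "\<lambda>v. 0"]) simp

lemma linear_in_coords_add:
  assumes "linear_in_coords V f" "linear_in_coords V g"
  shows "linear_in_coords V (\<lambda>z. f z + g z)"
proof -
  from assms obtain a b where "\<forall>z. f z = (\<Sum>v\<in>V. a v * z v)" "\<forall>z. g z = (\<Sum>v\<in>V. b v * z v)"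
    unfolding linear_in_coords_def by blast
  then show ?thesis unfolding linear_in_coords_def
    by (intro exI[of _ "\<lambda>v. a v + b v"]) (simp add: sum.distrib distrib_right)
qed

lemma linear_in_coords_scale:
  assumes "linear_in_coords V f"
  shows "linear_in_coords V (\<lambda>z. t * f z)"
proof -
  from assms obtain a where "\<forall>z. f z = (\<Sum>v\<in>V. a v * z v)" unfolding linear_in_coords_def by blast
  then show ?thesis unfolding linear_in_coords_def
    by (intro exI[of _ "\<lambda>v. t * a v"]) (simp add: sum_distrib_left mult.assoc)
qed

lemma linear_in_coords_minus: "linear_in_coords V f \<Longrightarrow> linear_in_coords V (\<lambda>z. - f z)"
  using linear_in_coords_scale[of V f "-1"] by simp

lemma linear_in_coords_diff:
  "linear_in_coords V f \<Longrightarrow> linear_in_coords V g \<Longrightarrow> linear_in_coords V (\<lambda>z. f z - g z)"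
  using linear_in_coords_add[of V f "\<lambda>z. - g z"] linear_in_coords_minus[of V g] by simp

lemma linear_in_coords_sum:
  "finite A \<Longrightarrow> \<forall>a\<in>A. linear_in_coords V (f a) \<Longrightarrow> linear_in_coords V (\<lambda>z. \<Sum>a\<in>A. f a z)"
  by (induction A rule: finite_induct) (auto intro: linear_in_coords_add linear_in_coords_const0)

lemma sum_divide_card_fibres:
  fixes w :: "'c \<Rightarrow> real"
  assumes "finite I"
  shows "(\<Sum>i\<in>I. w (g i) / real (card {j\<in>I. g j = g i})) = (\<Sum>c\<in>g ` I. w c)"
proof -
  have "(\<Sum>i\<in>I. w (g i) / real (card {j\<in>I. g j = g i}))
      = (\<Sum>c\<in>g ` I. \<Sum>i\<in>{j\<in>I. g j = c}. w (g i) / real (card {j\<in>I. g j = g i}))"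
    by (rule sum.image_gen[OF assms])
  also have "\<dots> = (\<Sum>c\<in>g ` I. \<Sum>i\<in>{j\<in>I. g j = c}. w c / real (card {j\<in>I. g j = c}))"
    by (intro sum.cong) auto
  also have "\<dots> = (\<Sum>c\<in>g ` I. w c)"
  proof (rule sum.cong[OF refl])
    fix c assume "c \<in> g ` I"
    then have "card {j\<in>I. g j = c} > 0" using assms by (auto simp: card_gt_0_iff)
    then show "(\<Sum>i\<in>{j\<in>I. g j = c}. w c / real (card {j\<in>I. g j = c})) = w c" by simp
  qed
  finally show ?thesis .
qed

lemma farkas:
  fixes f :: "'i \<Rightarrow> ('v \<Rightarrow> real) \<Rightarrow> real"
  assumes V: "finite V" and I: "finite I" and lin: "\<forall>i\<in>I. linear_in_coords V (f i)"
    and infeasible: "\<nexists>z. \<forall>i\<in>I. f i z \<le> r i"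
  shows "\<exists>lam. (\<forall>i\<in>I. lam i \<ge> 0) \<and> (\<forall>z. (\<Sum>i\<in>I. lam i * f i z) = 0) \<and> (\<Sum>i\<in>I. lam i * r i) < 0"
proof -
  from lin obtain a where a: "\<forall>i\<in>I. \<forall>z. f i z = (\<Sum>v\<in>V. a i v * z v)"
    unfolding linear_in_coords_def by metis
  define g where "g i = ((\<lambda>v. if v \<in> V then a i v else 0), r i)" for i
  define C where "C = g ` I"
  have f_g: "f i z = (\<Sum>v\<in>V. fst (g i) v * z v)" if "i \<in> I" for i z
    using a that unfolding g_def by (auto intro: sum.cong)
  have "\<nexists>z. ineq_sat V C z"
    using infeasible f_g unfolding ineq_sat_def C_def by (auto simp: g_def)
  moreover have "finite C" "\<forall>c\<in>C. \<forall>v. v \<notin> V \<longrightarrow> fst c v = 0"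
    unfolding C_def g_def using I by auto
  ultimately obtain r0 where "r0 < 0" "nonneg_comb C (\<lambda>_. 0, r0)"
    using fourier_motzkin[OF V] by blast
  then obtain lam where lam: "\<forall>c\<in>C. lam c \<ge> 0" "\<forall>v. 0 = (\<Sum>c\<in>C. lam c * fst c v)"
    "r0 = (\<Sum>c\<in>C. lam c * snd c)"
    using nonneg_comb_multipliers[OF _ \<open>finite C\<close>] by fastforce
  text \<open>Each inequality of C may come from several indices; its multiplier is shared evenly.\<close>
  define mu where "mu i = lam (g i) / real (card {j\<in>I. g j = g i})" for i
  have mu_sum: "(\<Sum>i\<in>I. mu i * h (g i)) = (\<Sum>c\<in>C. lam c * h c)" for h
    using sum_divide_card_fibres[OF I, of "\<lambda>c. lam c * h c" g] unfolding mu_def C_def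
    by (simp add: field_simps)
  show ?thesis
  proof (intro exI[of _ mu] conjI allI ballI)
    show "mu i \<ge> 0" if "i \<in> I" for i using lam(1) that unfolding mu_def C_def by auto
    fix z
    have "(\<Sum>i\<in>I. mu i * f i z) = (\<Sum>c\<in>C. lam c * (\<Sum>v\<in>V. fst c v * z v))"
      using f_g mu_sum[of "\<lambda>c. \<Sum>v\<in>V. fst c v * z v"] by simp
    also have "\<dots> = (\<Sum>v\<in>V. (\<Sum>c\<in>C. lam c * fst c v) * z v)"
      by (simp add: sum_distrib_left sum_distrib_right mult.assoc sum.swap[of _ C])
    also have "\<dots> = 0" using lam(2) by simp
    finally show "(\<Sum>i\<in>I. mu i * f i z) = 0" .
  next
    show "(\<Sum>i\<in>I. mu i * r i) < 0"
      using mu_sum[of snd] lam(3) \<open>r0 < 0\<close> by (simp add: g_def)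
  qed
qed

lemma farkas_with_objective:
  fixes f :: "'i \<Rightarrow> ('v \<Rightarrow> real) \<Rightarrow> real"
  assumes V: "finite V" and I: "finite I"
    and lin: "\<forall>i\<in>I. linear_in_coords V (f i)" "linear_in_coords V g"
    and no_point: "\<nexists>z. (\<forall>i\<in>I. f i z \<le> r i) \<and> v \<le> g z"
  shows "\<exists>lam t. (\<forall>i\<in>I. lam i \<ge> 0) \<and> t \<ge> 0 \<and> (\<forall>z. (\<Sum>i\<in>I. lam i * f i z) = t * g z)
                 \<and> (\<Sum>i\<in>I. lam i * r i) < t * v"
proof -
  define J where "J = insert None (Some ` I)"
  define f' where "f' j z = (case j of Some i \<Rightarrow> f i z | None \<Rightarrow> - g z)" for j z
  define r' where "r' j = (case j of Some i \<Rightarrow> r i | None \<Rightarrow> - v)" for j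
  have sum_J: "(\<Sum>j\<in>J. h j) = h None + (\<Sum>i\<in>I. h (Some i))" for h :: "_ \<Rightarrow> real"
    unfolding J_def using I by (simp add: sum.reindex)
  have "finite J" unfolding J_def using I by simp
  moreover have "\<forall>j\<in>J. linear_in_coords V (f' j)"
    unfolding J_def f'_def using lin by (auto intro: linear_in_coords_minus)
  moreover have "\<nexists>z. \<forall>j\<in>J. f' j z \<le> r' j"
    using no_point unfolding J_def f'_def r'_def by force
  ultimately obtain lam where lam0: "\<forall>j\<in>J. lam j \<ge> 0"
    and comb: "\<forall>z. (\<Sum>j\<in>J. lam j * f' j z) = 0" and neg: "(\<Sum>j\<in>J. lam j * r' j) < 0"
    using farkas[OF V] by blast
  show ?thesis
  proof (intro exI conjI)
    show "\<forall>i\<in>I. lam (Some i) \<ge> 0" "lam None \<ge> 0" using lam0 unfolding J_def by auto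
    show "\<forall>z. (\<Sum>i\<in>I. lam (Some i) * f i z) = lam None * g z"
      using comb unfolding sum_J f'_def by (simp add: algebra_simps)
    show "(\<Sum>i\<in>I. lam (Some i) * r i) < lam None * v"
      using neg unfolding sum_J r'_def by (simp add: algebra_simps)
  qed
qed

text \<open>The multiplier t of the objective row cannot vanish, because z0 is feasible; normalised
  to t = 1 the Farkas certificate would violate the bound.\<close>
lemma dual_value_attained:
  fixes f :: "'i \<Rightarrow> ('v \<Rightarrow> real) \<Rightarrow> real"
  assumes V: "finite V" and I: "finite I"
    and lin: "\<forall>i\<in>I. linear_in_coords V (f i)" "linear_in_coords V g"
    and feasible: "\<forall>i\<in>I. f i z0 \<le> r i"
    and bound: "\<And>lam. \<forall>i\<in>I. lam i \<ge> 0 \<Longrightarrow> \<forall>z. (\<Sum>i\<in>I. lam i * f i z) = g z \<Longrightarrow>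
                  v \<le> (\<Sum>i\<in>I. lam i * r i)"
  shows "\<exists>z. (\<forall>i\<in>I. f i z \<le> r i) \<and> v \<le> g z"
proof (rule ccontr)
  assume "\<nexists>z. (\<forall>i\<in>I. f i z \<le> r i) \<and> v \<le> g z"
  then obtain lam t where lam0: "\<forall>i\<in>I. lam i \<ge> 0" and "t \<ge> 0"
    and comb: "\<forall>z. (\<Sum>i\<in>I. lam i * f i z) = t * g z" and rhs: "(\<Sum>i\<in>I. lam i * r i) < t * v"
    using farkas_with_objective[OF V I lin] by blast
  have "(\<Sum>i\<in>I. lam i * f i z0) \<le> (\<Sum>i\<in>I. lam i * r i)"
    using feasible lam0 by (intro sum_mono mult_left_mono) auto
  with comb rhs have "t \<noteq> 0" by force
  with \<open>t \<ge> 0\<close> have "t > 0" by simp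
  have "v \<le> (\<Sum>i\<in>I. lam i / t * r i)"
  proof (rule bound)
    show "\<forall>i\<in>I. lam i / t \<ge> 0" using lam0 \<open>t > 0\<close> by simp
    show "\<forall>z. (\<Sum>i\<in>I. lam i / t * f i z) = g z"
      using comb \<open>t > 0\<close> by (simp add: sum_divide_distrib[symmetric])
  qed
  also have "\<dots> < v"
    using rhs \<open>t > 0\<close> by (simp add: sum_divide_distrib[symmetric] pos_divide_less_eq mult.commute)
  finally show False by simp
qed

section \<open>Weak duality between RMP and DRMP\<close>

lemma sum_swap_restrict_subsets:
  assumes "finite B" "finite L" "\<forall>b\<in>B. Lb b \<subseteq> L"
  shows "(\<Sum>b\<in>B. \<Sum>l\<in>Lb b. g b l) = (\<Sum>l\<in>L. \<Sum>b\<in>{b\<in>B. l \<in> Lb b}. g b l)"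
proof -
  have "(\<Sum>b\<in>B. \<Sum>l\<in>Lb b. g b l) = (\<Sum>b\<in>B. \<Sum>l\<in>{l\<in>L. l \<in> Lb b}. g b l)"
    using assms(3) by (intro sum.cong refl) auto
  also have "\<dots> = (\<Sum>l\<in>L. \<Sum>b\<in>{b\<in>B. l \<in> Lb b}. g b l)"
    using sum.swap_restrict[OF assms(1,2), of g "\<lambda>b l. l \<in> Lb b"] by simp
  finally show ?thesis .
qed

lemma sum_chi_mult:
  assumes "finite L"
  shows "(\<Sum>l\<in>L. chi L2 l * y l) = (\<Sum>l\<in>L - L2. y l)"
proof -
  have "(\<Sum>l\<in>L. chi L2 l * y l) = (\<Sum>l\<in>L. if l \<notin> L2 then y l else 0)"
    by (rule sum.cong) (auto simp: chi_def)
  also have "\<dots> = (\<Sum>l\<in>L - L2. y l)"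
    using assms by (simp add: sum.inter_filter set_diff_eq)
  finally show ?thesis .
qed

lemma rmp_x_cost_lower_bound:
  assumes x0: "\<forall>b\<in>B. \<forall>l\<in>Lb b. \<forall>m\<in>Mb b l. x b l m \<ge> 0"
    and convex: "\<forall>b\<in>B. (\<Sum>l\<in>Lb b. \<Sum>m\<in>Mb b l. x b l m) = 1"
    and x_con: "\<forall>b\<in>B. \<forall>l\<in>Lb b. \<forall>m\<in>Mb b l.
                  al b - be b l + de l + real m * lsize S l * (ph - ps) \<le> c b l m"
  shows "(\<Sum>b\<in>B. al b) + (\<Sum>b\<in>B. \<Sum>l\<in>Lb b. (de l - be b l) * (\<Sum>m\<in>Mb b l. x b l m))
           + (ph - ps) * (\<Sum>b\<in>B. \<Sum>l\<in>Lb b. \<Sum>m\<in>Mb b l. real m * lsize S l * x b l m)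
         \<le> (\<Sum>b\<in>B. \<Sum>l\<in>Lb b. \<Sum>m\<in>Mb b l. c b l m * x b l m)"
proof -
  have per_lot: "(\<Sum>m\<in>Mb b l. (al b - be b l + de l + real m * lsize S l * (ph - ps)) * x b l m)
      = al b * (\<Sum>m\<in>Mb b l. x b l m) + (de l - be b l) * (\<Sum>m\<in>Mb b l. x b l m)
        + (ph - ps) * (\<Sum>m\<in>Mb b l. real m * lsize S l * x b l m)" for b l
    by (simp add: algebra_simps sum.distrib sum_distrib_left sum_subtractf)
  have "(\<Sum>b\<in>B. al b) + (\<Sum>b\<in>B. \<Sum>l\<in>Lb b. (de l - be b l) * (\<Sum>m\<in>Mb b l. x b l m))
           + (ph - ps) * (\<Sum>b\<in>B. \<Sum>l\<in>Lb b. \<Sum>m\<in>Mb b l. real m * lsize S l * x b l m)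
      = (\<Sum>b\<in>B. \<Sum>l\<in>Lb b. \<Sum>m\<in>Mb b l.
           (al b - be b l + de l + real m * lsize S l * (ph - ps)) * x b l m)"
  proof -
    have "(\<Sum>b\<in>B. al b) = (\<Sum>b\<in>B. al b * (\<Sum>l\<in>Lb b. \<Sum>m\<in>Mb b l. x b l m))"
      using convex by simp
    then show ?thesis unfolding per_lot by (simp add: sum.distrib sum_distrib_left)
  qed
  also have "\<dots> \<le> (\<Sum>b\<in>B. \<Sum>l\<in>Lb b. \<Sum>m\<in>Mb b l. c b l m * x b l m)"
    using x_con x0 by (intro sum_mono mult_right_mono) auto
  finally show ?thesis .
qed

lemma rmp_y_cost_lower_bound:
  assumes fin: "finite B" "finite L1" and Lb: "\<forall>b\<in>B. Lb b \<subseteq> L1"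
    and y0: "\<forall>l\<in>L1. y l \<ge> 0" and be0: "\<forall>b\<in>B. \<forall>l\<in>Lb b. be b l \<ge> 0" and de0: "\<forall>l\<in>L1. de l \<ge> 0"
    and beta_con: "\<forall>b\<in>B. \<forall>l\<in>Lb b. y l - (\<Sum>m\<in>Mb b l. x b l m) \<ge> 0"
    and delta_con: "\<forall>l\<in>L1. (\<Sum>b\<in>{b\<in>B. l \<in> Lb b}. \<Sum>m\<in>Mb b l. x b l m) - y l \<ge> 0"
    and y_con: "\<forall>l\<in>L1. (\<Sum>b\<in>{b\<in>B. l \<in> Lb b}. be b l) - ga - de l + chi L2 l * mu \<le> 0"
  shows "mu * (\<Sum>l\<in>L1 - L2. y l) - ga * (\<Sum>l\<in>L1. y l)
         \<le> (\<Sum>b\<in>B. \<Sum>l\<in>Lb b. (de l - be b l) * (\<Sum>m\<in>Mb b l. x b l m))"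
proof -
  define X where "X b l = (\<Sum>m\<in>Mb b l. x b l m)" for b l
  define sB where "sB l = (\<Sum>b\<in>{b\<in>B. l \<in> Lb b}. be b l)" for l
  have "(\<Sum>l\<in>L1. y l * (chi L2 l * mu - ga)) = mu * (\<Sum>l\<in>L1. chi L2 l * y l) - ga * (\<Sum>l\<in>L1. y l)"
    by (simp add: algebra_simps sum_subtractf sum_distrib_left)
  then have "mu * (\<Sum>l\<in>L1 - L2. y l) - ga * (\<Sum>l\<in>L1. y l) = (\<Sum>l\<in>L1. y l * (chi L2 l * mu - ga))"
    unfolding sum_chi_mult[OF fin(2)] by simp
  also have "\<dots> \<le> (\<Sum>l\<in>L1. y l * (de l - sB l))"
    using y0 y_con unfolding sB_def by (intro sum_mono mult_left_mono) (auto simp: algebra_simps)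
  also have "\<dots> = (\<Sum>l\<in>L1. de l * y l) - (\<Sum>b\<in>B. \<Sum>l\<in>Lb b. be b l * y l)"
    unfolding sum_swap_restrict_subsets[OF fin Lb] sB_def
    by (simp add: algebra_simps sum_subtractf sum_distrib_left)
  also have "\<dots> \<le> (\<Sum>l\<in>L1. de l * (\<Sum>b\<in>{b\<in>B. l \<in> Lb b}. X b l)) - (\<Sum>b\<in>B. \<Sum>l\<in>Lb b. be b l * X b l)"
  proof (rule diff_mono)
    show "(\<Sum>l\<in>L1. de l * y l) \<le> (\<Sum>l\<in>L1. de l * (\<Sum>b\<in>{b\<in>B. l \<in> Lb b}. X b l))"
      using de0 delta_con unfolding X_def by (intro sum_mono mult_left_mono) auto
    show "(\<Sum>b\<in>B. \<Sum>l\<in>Lb b. be b l * X b l) \<le> (\<Sum>b\<in>B. \<Sum>l\<in>Lb b. be b l * y l)"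
      using be0 beta_con unfolding X_def by (intro sum_mono mult_left_mono) auto
  qed
  also have "\<dots> = (\<Sum>b\<in>B. \<Sum>l\<in>Lb b. (de l - be b l) * X b l)"
    using sum_swap_restrict_subsets[OF fin Lb, of "\<lambda>b l. de l * X b l"]
    by (simp add: sum_distrib_left left_diff_distrib sum_subtractf)
  finally show ?thesis unfolding X_def .
qed

lemma rmp_drmp_weak_duality:
  assumes fin: "finite B" "finite L1" and Lb: "\<forall>b\<in>B. Lb b \<subseteq> L1"
    and primal: "rmp_feasible B S L1 L2 Lb Mb k Ilo Ihi x y p"
    and dual: "drmp_feasible B S L1 L2 Lb Mb c P al be ga de mu ph ps"
  shows "dmp_obj B k Ilo Ihi al ga mu ph ps \<le> rmp_obj B Lb Mb c P x y p"
proof -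
  define Q where "Q = (\<Sum>b\<in>B. \<Sum>l\<in>Lb b. \<Sum>m\<in>Mb b l. real m * lsize S l * x b l m)"
  define Y where "Y = (\<Sum>l\<in>L1. y l)"
  define Y' where "Y' = (\<Sum>l\<in>L1 - L2. y l)"
  from primal have p0: "p \<ge> 0" and "Y \<le> real k" "Y' + p \<ge> 1" "Ilo \<le> Q" "Q \<le> Ihi"
    unfolding rmp_feasible_def Q_def Y_def Y'_def by auto
  moreover from dual have "ga \<ge> 0" "mu \<ge> 0" "ph \<ge> 0" "ps \<ge> 0" "mu \<le> P"
    unfolding drmp_feasible_def by auto
  ultimately have "ga * Y \<le> ga * real k" "mu * (1 - p) \<le> mu * Y'" "mu * p \<le> P * p"
    "ph * Ilo \<le> ph * Q" "ps * Q \<le> ps * Ihi"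
    by (auto intro: mult_left_mono mult_right_mono)
  moreover have "(\<Sum>b\<in>B. al b) + (\<Sum>b\<in>B. \<Sum>l\<in>Lb b. (de l - be b l) * (\<Sum>m\<in>Mb b l. x b l m))
      + (ph - ps) * Q \<le> (\<Sum>b\<in>B. \<Sum>l\<in>Lb b. \<Sum>m\<in>Mb b l. c b l m * x b l m)"
    unfolding Q_def
    by (rule rmp_x_cost_lower_bound) (use primal dual in \<open>auto simp: rmp_feasible_def drmp_feasible_def\<close>)
  moreover have "mu * Y' - ga * Y \<le> (\<Sum>b\<in>B. \<Sum>l\<in>Lb b. (de l - be b l) * (\<Sum>m\<in>Mb b l. x b l m))"
    unfolding Y_def Y'_def
    by (rule rmp_y_cost_lower_bound[OF fin Lb])
      (use primal dual in \<open>auto simp: rmp_feasible_def drmp_feasible_def\<close>)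
  ultimately show ?thesis
    unfolding dmp_obj_def rmp_obj_def by (simp add: algebra_simps)
qed

section \<open>Strong duality between RMP and DRMP\<close>

text \<open>The DRMP as a finite system of linear inequalities: coordinates are indexed by dual_var,
  inequalities (the sign conditions included) by dual_con.\<close>
datatype ('b, 'l) dual_var = Alpha 'b | Beta 'b 'l | Gamma | Delta 'l | Mu | Phi | Psi

datatype ('b, 'l) dual_con =
  XCon 'b 'l nat | YCon 'l | PCon
| BetaNonneg 'b 'l | GammaNonneg | DeltaNonneg 'l | MuNonneg | PhiNonneg | PsiNonneg

definition drmp_coords :: "'b set \<Rightarrow> ('b \<Rightarrow> 'l set) \<Rightarrow> 'l set \<Rightarrow> ('b, 'l) dual_var set" where
  "drmp_coords B Lb L1 =
     Alpha ` B \<union> (\<lambda>(b, l). Beta b l) ` (SIGMA b:B. Lb b) \<union> {Gamma} \<union> Delta ` L1 \<union> {Mu, Phi, Psi}"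

definition drmp_cons ::
  "'b set \<Rightarrow> ('b \<Rightarrow> 'l set) \<Rightarrow> ('b \<Rightarrow> 'l \<Rightarrow> nat set) \<Rightarrow> 'l set \<Rightarrow> ('b, 'l) dual_con set" where
  "drmp_cons B Lb Mb L1 =
     (\<lambda>(b, l, m). XCon b l m) ` (SIGMA b:B. SIGMA l:Lb b. Mb b l) \<union> YCon ` L1 \<union> {PCon}
     \<union> (\<lambda>(b, l). BetaNonneg b l) ` (SIGMA b:B. Lb b) \<union> {GammaNonneg} \<union> DeltaNonneg ` L1
     \<union> {MuNonneg, PhiNonneg, PsiNonneg}"

definition drmp_lhs where
  "drmp_lhs B S L2 Lb i z = (case i of
     XCon b l m \<Rightarrow> z (Alpha b) - z (Beta b l) + z (Delta l) + real m * lsize S l * (z Phi - z Psi)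
   | YCon l \<Rightarrow> (\<Sum>b\<in>{b\<in>B. l \<in> Lb b}. z (Beta b l)) - z Gamma - z (Delta l) + chi L2 l * z Mu
   | PCon \<Rightarrow> z Mu
   | BetaNonneg b l \<Rightarrow> - z (Beta b l) | GammaNonneg \<Rightarrow> - z Gamma | DeltaNonneg l \<Rightarrow> - z (Delta l)
   | MuNonneg \<Rightarrow> - z Mu | PhiNonneg \<Rightarrow> - z Phi | PsiNonneg \<Rightarrow> - z Psi)"

definition drmp_rhs where
  "drmp_rhs c P i = (case i of XCon b l m \<Rightarrow> c b l m | PCon \<Rightarrow> P | _ \<Rightarrow> 0)"

definition dmp_obj_coords where
  "dmp_obj_coords B k Ilo Ihi z =
     dmp_obj B k Ilo Ihi (\<lambda>b. z (Alpha b)) (z Gamma) (z Mu) (z Phi) (z Psi)"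

lemma drmp_coords_mem:
  "b \<in> B \<Longrightarrow> Alpha b \<in> drmp_coords B Lb L1"
  "b \<in> B \<Longrightarrow> l \<in> Lb b \<Longrightarrow> Beta b l \<in> drmp_coords B Lb L1"
  "l \<in> L1 \<Longrightarrow> Delta l \<in> drmp_coords B Lb L1"
  "Gamma \<in> drmp_coords B Lb L1" "Mu \<in> drmp_coords B Lb L1"
  "Phi \<in> drmp_coords B Lb L1" "Psi \<in> drmp_coords B Lb L1"
  unfolding drmp_coords_def by force+

lemma drmp_cons_mem:
  "b \<in> B \<Longrightarrow> l \<in> Lb b \<Longrightarrow> m \<in> Mb b l \<Longrightarrow> XCon b l m \<in> drmp_cons B Lb Mb L1"
  "b \<in> B \<Longrightarrow> l \<in> Lb b \<Longrightarrow> BetaNonneg b l \<in> drmp_cons B Lb Mb L1"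
  "l \<in> L1 \<Longrightarrow> YCon l \<in> drmp_cons B Lb Mb L1"
  "l \<in> L1 \<Longrightarrow> DeltaNonneg l \<in> drmp_cons B Lb Mb L1"
  "PCon \<in> drmp_cons B Lb Mb L1" "GammaNonneg \<in> drmp_cons B Lb Mb L1"
  "MuNonneg \<in> drmp_cons B Lb Mb L1" "PhiNonneg \<in> drmp_cons B Lb Mb L1"
  "PsiNonneg \<in> drmp_cons B Lb Mb L1"
  unfolding drmp_cons_def by force+

lemma drmp_feasible_iff_cons:
  "drmp_feasible B S L1 L2 Lb Mb c P (\<lambda>b. z (Alpha b)) (\<lambda>b l. z (Beta b l)) (z Gamma)
     (\<lambda>l. z (Delta l)) (z Mu) (z Phi) (z Psi)
   \<longleftrightarrow> (\<forall>i\<in>drmp_cons B Lb Mb L1. drmp_lhs B S L2 Lb i z \<le> drmp_rhs c P i)"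
  (is "?feasible \<longleftrightarrow> (\<forall>i\<in>?I. ?holds i)")
proof
  assume ?feasible
  then show "\<forall>i\<in>?I. ?holds i"
    unfolding drmp_feasible_def drmp_cons_def drmp_lhs_def drmp_rhs_def by auto
next
  assume holds: "\<forall>i\<in>?I. ?holds i"
  have "?holds (XCon b l m)" if "b \<in> B" "l \<in> Lb b" "m \<in> Mb b l" for b l m
    using holds that by (simp add: drmp_cons_mem)
  moreover have "?holds (BetaNonneg b l)" if "b \<in> B" "l \<in> Lb b" for b l
    using holds that by (simp add: drmp_cons_mem)
  moreover have "?holds (YCon l)" "?holds (DeltaNonneg l)" if "l \<in> L1" for l
    using holds that by (simp_all add: drmp_cons_mem)
  moreover have "?holds PCon" "?holds GammaNonneg" "?holds MuNonneg" "?holds PhiNonneg"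
    "?holds PsiNonneg"
    using holds by (simp_all add: drmp_cons_mem)
  ultimately show ?feasible
    unfolding drmp_feasible_def drmp_lhs_def drmp_rhs_def by auto
qed

lemma sum_image_Sigma:
  assumes "finite A" "\<And>a. a \<in> A \<Longrightarrow> finite (Bs a)"
    and inj: "\<And>a b a' b'. f a b = f a' b' \<Longrightarrow> a = a' \<and> b = b'"
  shows "sum h ((\<lambda>(a, b). f a b) ` Sigma A Bs) = (\<Sum>a\<in>A. \<Sum>b\<in>Bs a. h (f a b))"
proof -
  have "inj_on (\<lambda>(a, b). f a b) (Sigma A Bs)" using inj by (auto simp: inj_on_def)
  then have "sum h ((\<lambda>(a, b). f a b) ` Sigma A Bs) = sum (h \<circ> (\<lambda>(a, b). f a b)) (Sigma A Bs)"
    by (rule sum.reindex)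
  then show ?thesis using assms(1,2) by (simp add: sum.Sigma comp_def case_prod_unfold)
qed

lemma sum_drmp_cons:
  fixes B :: "'b set" and L1 :: "'l set" and h :: "('b, 'l) dual_con \<Rightarrow> 'a::comm_monoid_add"
  assumes fin: "finite B" "finite L1" "\<forall>b\<in>B. Lb b \<subseteq> L1" "\<forall>b\<in>B. \<forall>l\<in>Lb b. finite (Mb b l)"
  shows "(\<Sum>i\<in>drmp_cons B Lb Mb L1. h i) =
     (\<Sum>b\<in>B. \<Sum>l\<in>Lb b. \<Sum>m\<in>Mb b l. h (XCon b l m)) + (\<Sum>l\<in>L1. h (YCon l)) + h PCon
     + (\<Sum>b\<in>B. \<Sum>l\<in>Lb b. h (BetaNonneg b l)) + h GammaNonneg + (\<Sum>l\<in>L1. h (DeltaNonneg l))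
     + h MuNonneg + h PhiNonneg + h PsiNonneg"
proof -
  have finLb: "finite (Lb b)" if "b \<in> B" for b using fin(2,3) that finite_subset by metis
  have fin_sigma: "finite (SIGMA b:B. Lb b)" "finite (SIGMA b:B. SIGMA l:Lb b. Mb b l)"
    using fin finLb by (auto intro!: finite_SigmaI)
  define UX where "UX = (\<lambda>(b, l, m). XCon b l m) ` (SIGMA b:B. SIGMA l:Lb b. Mb b l)"
  define UB where "UB = (\<lambda>(b, l). BetaNonneg b l) ` (SIGMA b:B. Lb b)"
  define US :: "('b, 'l) dual_con set" where "US = {PCon, GammaNonneg, MuNonneg, PhiNonneg, PsiNonneg}"
  have x_part: "sum h UX = (\<Sum>b\<in>B. \<Sum>l\<in>Lb b. \<Sum>m\<in>Mb b l. h (XCon b l m))"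
  proof -
    have "sum h UX = (\<Sum>b\<in>B. \<Sum>lm\<in>(SIGMA l:Lb b. Mb b l). h (case lm of (l, m) \<Rightarrow> XCon b l m))"
      unfolding UX_def by (rule sum_image_Sigma) (use fin finLb in \<open>auto intro!: finite_SigmaI\<close>)
    also have "\<dots> = (\<Sum>b\<in>B. \<Sum>l\<in>Lb b. \<Sum>m\<in>Mb b l. h (XCon b l m))"
      using fin finLb by (intro sum.cong refl) (simp add: sum.Sigma case_prod_unfold)
    finally show ?thesis .
  qed
  have beta_part: "sum h UB = (\<Sum>b\<in>B. \<Sum>l\<in>Lb b. h (BetaNonneg b l))"
    unfolding UB_def using fin finLb by (intro sum_image_Sigma) auto
  have fin_parts: "finite UX" "finite UB" "finite (YCon ` L1)" "finite (DeltaNonneg ` L1)" "finite US"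
    unfolding UX_def UB_def US_def using fin_sigma fin by auto
  have "drmp_cons B Lb Mb L1 = UX \<union> (YCon ` L1 \<union> (UB \<union> (DeltaNonneg ` L1 \<union> US)))"
    unfolding drmp_cons_def UX_def UB_def US_def by auto
  also have "sum h \<dots> = sum h UX + (sum h (YCon ` L1) + (sum h UB + (sum h (DeltaNonneg ` L1) + sum h US)))"
  proof -
    have "UX \<inter> (YCon ` L1 \<union> (UB \<union> (DeltaNonneg ` L1 \<union> US))) = {}"
      "YCon ` L1 \<inter> (UB \<union> (DeltaNonneg ` L1 \<union> US)) = {}"
      "UB \<inter> (DeltaNonneg ` L1 \<union> US) = {}" "DeltaNonneg ` L1 \<inter> US = {}"
      unfolding UX_def UB_def US_def by auto
    with fin_parts show ?thesis by (metis finite_UnI sum.union_disjoint)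
  qed
  finally show ?thesis
    unfolding x_part beta_part US_def by (simp add: sum.reindex inj_on_def add_ac)
qed

lemma finite_drmp_coords:
  "finite B \<Longrightarrow> finite L1 \<Longrightarrow> \<forall>b\<in>B. Lb b \<subseteq> L1 \<Longrightarrow> finite (drmp_coords B Lb L1)"
  unfolding drmp_coords_def by (auto intro!: finite_SigmaI intro: finite_subset)

lemma finite_drmp_cons:
  assumes "finite B" "finite L1" "\<forall>b\<in>B. Lb b \<subseteq> L1" "\<forall>b\<in>B. \<forall>l\<in>Lb b. finite (Mb b l)"
  shows "finite (drmp_cons B Lb Mb L1)"
proof -
  have "\<forall>b\<in>B. finite (Lb b)" using assms(2,3) finite_subset by blast
  with assms show ?thesis unfolding drmp_cons_def by (auto intro!: finite_SigmaI)
qed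

lemma linear_drmp_lhs:
  assumes fin: "finite B" "finite L1" and Lb: "\<forall>b\<in>B. Lb b \<subseteq> L1"
    and i: "i \<in> drmp_cons B Lb Mb L1"
  shows "linear_in_coords (drmp_coords B Lb L1) (drmp_lhs B S L2 Lb i)"
proof -
  have coord: "linear_in_coords (drmp_coords B Lb L1) (\<lambda>z. z v)" if "v \<in> drmp_coords B Lb L1" for v
    using finite_drmp_coords[OF fin Lb] that by (rule linear_in_coords_coord)
  have "\<forall>b\<in>B. \<forall>l\<in>Lb b. l \<in> L1" using Lb by blast
  then show ?thesis
    using i fin unfolding drmp_cons_def
    by (auto simp: drmp_lhs_def[abs_def] intro!: linear_in_coords_add linear_in_coords_diff
        linear_in_coords_scale linear_in_coords_minus linear_in_coords_sum coord drmp_coords_mem)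
qed

lemma linear_dmp_obj_coords:
  assumes fin: "finite B" "finite L1" and Lb: "\<forall>b\<in>B. Lb b \<subseteq> L1"
  shows "linear_in_coords (drmp_coords B Lb L1) (dmp_obj_coords B k Ilo Ihi)"
proof -
  have coord: "linear_in_coords (drmp_coords B Lb L1) (\<lambda>z. z v)" if "v \<in> drmp_coords B Lb L1" for v
    using finite_drmp_coords[OF fin Lb] that by (rule linear_in_coords_coord)
  show ?thesis
    using fin unfolding dmp_obj_coords_def dmp_obj_def
    by (auto intro!: linear_in_coords_add linear_in_coords_diff linear_in_coords_scale
        linear_in_coords_sum coord drmp_coords_mem)
qed

lemma drmp_certificate_identity:
  assumes fin: "finite B" "finite L1" "\<forall>b\<in>B. Lb b \<subseteq> L1" "\<forall>b\<in>B. \<forall>l\<in>Lb b. finite (Mb b l)"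
    and comb: "\<forall>z. (\<Sum>i\<in>drmp_cons B Lb Mb L1. lam i * drmp_lhs B S L2 Lb i z) = dmp_obj_coords B k Ilo Ihi z"
  shows "(\<Sum>b\<in>B. \<Sum>l\<in>Lb b. \<Sum>m\<in>Mb b l. lam (XCon b l m) *
            (z (Alpha b) - z (Beta b l) + z (Delta l) + real m * lsize S l * (z Phi - z Psi)))
       + (\<Sum>l\<in>L1. lam (YCon l) *
            ((\<Sum>b\<in>{b\<in>B. l \<in> Lb b}. z (Beta b l)) - z Gamma - z (Delta l) + chi L2 l * z Mu))
       + lam PCon * z Mu - (\<Sum>b\<in>B. \<Sum>l\<in>Lb b. lam (BetaNonneg b l) * z (Beta b l))
       - lam GammaNonneg * z Gamma - (\<Sum>l\<in>L1. lam (DeltaNonneg l) * z (Delta l))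
       - lam MuNonneg * z Mu - lam PhiNonneg * z Phi - lam PsiNonneg * z Psi
     = (\<Sum>b\<in>B. z (Alpha b)) - real k * z Gamma + Ilo * z Phi - Ihi * z Psi + z Mu"
  using comb[rule_format, of z] unfolding sum_drmp_cons[OF fin]
  by (simp add: drmp_lhs_def dmp_obj_coords_def dmp_obj_def sum_negf)

text \<open>Comparing coefficients in the certificate identity: each equation below is that identity
  evaluated at a unit vector.\<close>
lemma drmp_certificate_scalar_coeffs:
  assumes "finite B" "finite L1" "\<forall>b\<in>B. Lb b \<subseteq> L1" "\<forall>b\<in>B. \<forall>l\<in>Lb b. finite (Mb b l)"
    and "\<forall>z. (\<Sum>i\<in>drmp_cons B Lb Mb L1. lam i * drmp_lhs B S L2 Lb i z) = dmp_obj_coords B k Ilo Ihi z"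
  shows "(\<Sum>l\<in>L1. lam (YCon l)) + lam GammaNonneg = real k"
    and "(\<Sum>l\<in>L1. lam (YCon l) * chi L2 l) + lam PCon - lam MuNonneg = 1"
    and "(\<Sum>b\<in>B. \<Sum>l\<in>Lb b. \<Sum>m\<in>Mb b l. real m * lsize S l * lam (XCon b l m)) - lam PhiNonneg = Ilo"
    and "(\<Sum>b\<in>B. \<Sum>l\<in>Lb b. \<Sum>m\<in>Mb b l. real m * lsize S l * lam (XCon b l m)) + lam PsiNonneg = Ihi"
  using drmp_certificate_identity[OF assms, of "\<lambda>v. if v = Gamma then 1 else 0"]
    drmp_certificate_identity[OF assms, of "\<lambda>v. if v = Mu then 1 else 0"]
    drmp_certificate_identity[OF assms, of "\<lambda>v. if v = Phi then 1 else 0"]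
    drmp_certificate_identity[OF assms, of "\<lambda>v. if v = Psi then 1 else 0"]
  by (simp_all add: sum_negf mult_ac)

lemma drmp_certificate_indexed_coeffs:
  assumes fin: "finite B" "finite L1" and Lb: "\<forall>b\<in>B. Lb b \<subseteq> L1"
    and Mb: "\<forall>b\<in>B. \<forall>l\<in>Lb b. finite (Mb b l)"
    and comb: "\<forall>z. (\<Sum>i\<in>drmp_cons B Lb Mb L1. lam i * drmp_lhs B S L2 Lb i z) = dmp_obj_coords B k Ilo Ihi z"
  shows "b0 \<in> B \<Longrightarrow> (\<Sum>l\<in>Lb b0. \<Sum>m\<in>Mb b0 l. lam (XCon b0 l m)) = 1"
    and "b0 \<in> B \<Longrightarrow> l0 \<in> Lb b0 \<Longrightarrow>
         lam (YCon l0) - (\<Sum>m\<in>Mb b0 l0. lam (XCon b0 l0 m)) = lam (BetaNonneg b0 l0)"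
    and "l0 \<in> L1 \<Longrightarrow>
         (\<Sum>b\<in>{b\<in>B. l0 \<in> Lb b}. \<Sum>m\<in>Mb b l0. lam (XCon b l0 m)) - lam (YCon l0) = lam (DeltaNonneg l0)"
proof -
  note identity = drmp_certificate_identity[OF fin Lb Mb comb]
  have finLb: "finite (Lb b)" if "b \<in> B" for b using fin(2) Lb that finite_subset by metis
  have mult_if: "(x::real) * (if P then y else 0) = (if P then x * y else 0)" for x y P by simp
  have sum_if_const: "(\<Sum>a\<in>A. if P then f a else (0::real)) = (if P then sum f A else 0)" for A P f
    by simp
  have if_conj: "(if P \<and> Q then (x::real) else 0) = (if P then if Q then x else 0 else 0)" for P Q x
    by simp
  show "(\<Sum>l\<in>Lb b0. \<Sum>m\<in>Mb b0 l. lam (XCon b0 l m)) = 1" if "b0 \<in> B"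
  proof -
    have "(\<Sum>b\<in>B. \<Sum>l\<in>Lb b. \<Sum>m\<in>Mb b l. lam (XCon b l m) * (if b = b0 then 1 else 0)) = 1"
      using identity[of "\<lambda>v. if v = Alpha b0 then 1 else 0"] that fin by simp
    then show ?thesis using that fin by (simp add: mult_if sum_if_const)
  qed
  show "lam (YCon l0) - (\<Sum>m\<in>Mb b0 l0. lam (XCon b0 l0 m)) = lam (BetaNonneg b0 l0)"
    if "b0 \<in> B" "l0 \<in> Lb b0"
  proof -
    have "(\<Sum>l\<in>L1. if l \<in> Lb b0 then if l = l0 then lam (YCon l0) else 0 else 0)
        = (\<Sum>l\<in>L1. if l = l0 then lam (YCon l0) else 0)"
      using that by (intro sum.cong) auto
    also have "\<dots> = lam (YCon l0)" using that Lb fin by auto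
    finally show ?thesis
      using identity[of "\<lambda>v. if v = Beta b0 l0 then 1 else 0"] that fin finLb Lb
      by (simp add: sum_negf mult_if if_conj sum_if_const cong: if_cong)
  qed
  show "(\<Sum>b\<in>{b\<in>B. l0 \<in> Lb b}. \<Sum>m\<in>Mb b l0. lam (XCon b l0 m)) - lam (YCon l0) = lam (DeltaNonneg l0)"
    if "l0 \<in> L1"
    using identity[of "\<lambda>v. if v = Delta l0 then 1 else 0"] that fin finLb Lb
    by (simp add: sum_negf mult_if sum_if_const sum.inter_filter cong: if_cong)
qed

lemma drmp_certificate_rmp_feasible:
  assumes fin: "finite B" "finite L1" and Lb: "\<forall>b\<in>B. Lb b \<subseteq> L1"
    and Mb: "\<forall>b\<in>B. \<forall>l\<in>Lb b. finite (Mb b l)"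
    and lam0: "\<forall>i\<in>drmp_cons B Lb Mb L1. lam i \<ge> 0"
    and comb: "\<forall>z. (\<Sum>i\<in>drmp_cons B Lb Mb L1. lam i * drmp_lhs B S L2 Lb i z) = dmp_obj_coords B k Ilo Ihi z"
  shows "rmp_feasible B S L1 L2 Lb Mb k Ilo Ihi (\<lambda>b l m. lam (XCon b l m)) (\<lambda>l. lam (YCon l)) (lam PCon)"
proof -
  have "lam (XCon b l m) \<ge> 0" if "b \<in> B" "l \<in> Lb b" "m \<in> Mb b l" for b l m
    using lam0 that by (auto simp: drmp_cons_mem)
  moreover have "lam (BetaNonneg b l) \<ge> 0" if "b \<in> B" "l \<in> Lb b" for b l
    using lam0 that by (auto simp: drmp_cons_mem)
  moreover have "lam (YCon l) \<ge> 0" "lam (DeltaNonneg l) \<ge> 0" if "l \<in> L1" for l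
    using lam0 that by (auto simp: drmp_cons_mem)
  moreover have "lam PCon \<ge> 0" "lam GammaNonneg \<ge> 0" "lam MuNonneg \<ge> 0"
    "lam PhiNonneg \<ge> 0" "lam PsiNonneg \<ge> 0"
    using lam0 by (auto simp: drmp_cons_mem)
  moreover have "(\<Sum>l\<in>L1 - L2. lam (YCon l)) = (\<Sum>l\<in>L1. lam (YCon l) * chi L2 l)"
    using sum_chi_mult[OF fin(2), of L2 "\<lambda>l. lam (YCon l)"] by (simp add: mult.commute)
  ultimately show ?thesis
    unfolding rmp_feasible_def
    using drmp_certificate_scalar_coeffs[OF fin Lb Mb comb]
      drmp_certificate_indexed_coeffs[OF fin Lb Mb comb]
    by (auto simp: drmp_cons_mem)
qed

lemma drmp_certificate_rmp_obj:
  assumes "finite B" "finite L1" "\<forall>b\<in>B. Lb b \<subseteq> L1" "\<forall>b\<in>B. \<forall>l\<in>Lb b. finite (Mb b l)"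
  shows "(\<Sum>i\<in>drmp_cons B Lb Mb L1. lam i * drmp_rhs c P i)
       = rmp_obj B Lb Mb c P (\<lambda>b l m. lam (XCon b l m)) (\<lambda>l. lam (YCon l)) (lam PCon)"
  unfolding sum_drmp_cons[OF assms] rmp_obj_def by (simp add: drmp_rhs_def mult.commute)

definition dual_point :: "('b \<Rightarrow> real) \<Rightarrow> ('b \<Rightarrow> 'l \<Rightarrow> real) \<Rightarrow> real \<Rightarrow> ('l \<Rightarrow> real) \<Rightarrow>
    real \<Rightarrow> real \<Rightarrow> real \<Rightarrow> ('b, 'l) dual_var \<Rightarrow> real" where
  "dual_point al be ga de mu ph ps v = (case v of Alpha b \<Rightarrow> al b | Beta b l \<Rightarrow> be b l | Gamma \<Rightarrow> ga
     | Delta l \<Rightarrow> de l | Mu \<Rightarrow> mu | Phi \<Rightarrow> ph | Psi \<Rightarrow> ps)"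

text \<open>A nonnegative combination of the DRMP inequalities that reproduces the DRMP objective is
  an RMP-feasible point whose cost is the combined right-hand side, so it is at least the RMP
  optimum; by dual_value_attained the DRMP therefore reaches that optimum.\<close>
lemma rmp_drmp_strong_duality:
  assumes fin: "finite B" "finite L1" and Lb: "\<forall>b\<in>B. Lb b \<subseteq> L1"
    and Mb: "\<forall>b\<in>B. \<forall>l\<in>Lb b. finite (Mb b l)"
    and primal: "rmp_optimal B S L1 L2 Lb Mb c k Ilo Ihi P x y p"
    and dual: "drmp_optimal B S L1 L2 Lb Mb c k Ilo Ihi P al be ga de mu ph ps"
  shows "rmp_obj B Lb Mb c P x y p = dmp_obj B k Ilo Ihi al ga mu ph ps"
proof (rule antisym)
  show "dmp_obj B k Ilo Ihi al ga mu ph ps \<le> rmp_obj B Lb Mb c P x y p"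
    using primal dual unfolding rmp_optimal_def drmp_optimal_def
    by (blast intro: rmp_drmp_weak_duality[OF fin Lb])
next
  let ?I = "drmp_cons B Lb Mb L1" and ?lhs = "drmp_lhs B S L2 Lb" and ?rhs = "drmp_rhs c P"
  have "\<exists>z. (\<forall>i\<in>?I. ?lhs i z \<le> ?rhs i) \<and> rmp_obj B Lb Mb c P x y p \<le> dmp_obj_coords B k Ilo Ihi z"
  proof (rule dual_value_attained[where V = "drmp_coords B Lb L1"])
    show "\<forall>i\<in>?I. ?lhs i (dual_point al be ga de mu ph ps) \<le> ?rhs i"
      using dual drmp_feasible_iff_cons[of B S L1 L2 Lb Mb c P "dual_point al be ga de mu ph ps"]
      unfolding drmp_optimal_def dual_point_def by simp
    fix lam assume "\<forall>i\<in>?I. lam i \<ge> 0" "\<forall>z. (\<Sum>i\<in>?I. lam i * ?lhs i z) = dmp_obj_coords B k Ilo Ihi z"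
    then show "rmp_obj B Lb Mb c P x y p \<le> (\<Sum>i\<in>?I. lam i * ?rhs i)"
      using drmp_certificate_rmp_feasible[OF fin Lb Mb] primal
      unfolding drmp_certificate_rmp_obj[OF fin Lb Mb] rmp_optimal_def by blast
  qed (use fin Lb Mb in \<open>auto intro: finite_drmp_coords finite_drmp_cons linear_drmp_lhs
      linear_dmp_obj_coords\<close>)
  then obtain z where "\<forall>i\<in>?I. ?lhs i z \<le> ?rhs i"
    and "rmp_obj B Lb Mb c P x y p \<le> dmp_obj_coords B k Ilo Ihi z" by blast
  with dual show "rmp_obj B Lb Mb c P x y p \<le> dmp_obj B k Ilo Ihi al ga mu ph ps"
    unfolding drmp_optimal_def drmp_feasible_iff_cons[symmetric] dmp_obj_coords_def by fastforce
qed

lemma mp_dmp_weak_duality: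
  assumes "finite B" "finite Ls"
    and "mp_feasible B S Ms Ls L2 k Ilo Ihi x y p"
    and "dmp_feasible B S Ms Ls L2 c P al be ga de mu ph ps"
  shows "dmp_obj B k Ilo Ihi al ga mu ph ps \<le> mp_obj B Ms Ls c P x y p"
proof -
  text \<open>The MP is the RMP in which every branch sees every lot-type and every multiplicity.\<close>
  have all_branches: "{b\<in>B. l \<in> Ls} = B" if "l \<in> Ls" for l using that by auto
  have "rmp_feasible B S Ls L2 (\<lambda>_. Ls) (\<lambda>_ _. Ms) k Ilo Ihi x y p"
    "drmp_feasible B S Ls L2 (\<lambda>_. Ls) (\<lambda>_ _. Ms) c P al be ga de mu ph ps"
    using assms(3,4) unfolding mp_feasible_def rmp_feasible_def dmp_feasible_def drmp_feasible_def
    by (simp_all add: all_branches)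
  then show ?thesis
    using rmp_drmp_weak_duality[of B Ls "\<lambda>_. Ls"] assms(1,2) by (simp add: rmp_obj_def mp_obj_def)
qed

lemma sum_extend_by_zero:
  assumes "finite Ls" "finite Ms" "A \<subseteq> Ls" "\<forall>l\<in>A. M l \<subseteq> Ms"
  shows "(\<Sum>l\<in>Ls. \<Sum>m\<in>Ms. if l \<in> A \<and> m \<in> M l then f l m else 0) = (\<Sum>l\<in>A. \<Sum>m\<in>M l. f l m)"
proof -
  have "(\<Sum>m\<in>Ms. if l \<in> A \<and> m \<in> M l then f l m else 0) = (if l \<in> A then (\<Sum>m\<in>M l. f l m) else 0)"
    for l
  proof (cases "l \<in> A")
    case True
    then have "{m\<in>Ms. m \<in> M l} = M l" using assms(4) by auto
    with True show ?thesis using assms(2) by (simp add: sum.inter_filter[symmetric])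
  qed simp
  moreover have "{l\<in>Ls. l \<in> A} = A" using assms(3) by auto
  ultimately show ?thesis using assms(1) by (simp add: sum.inter_filter[symmetric])
qed

lemma mp_feasible_zero_extension:
  assumes fin: "finite B" "finite Ms" "finite Ls" and L1: "L1 \<subseteq> Ls"
    and Lb: "\<forall>b\<in>B. Lb b \<subseteq> L1" and Mb: "\<forall>b\<in>B. \<forall>l\<in>Lb b. Mb b l \<subseteq> Ms"
    and primal: "rmp_feasible B S L1 L2 Lb Mb k Ilo Ihi x y p"
  shows "mp_feasible B S Ms Ls L2 k Ilo Ihi
           (\<lambda>b l m. if l \<in> Lb b \<and> m \<in> Mb b l then x b l m else 0) (\<lambda>l. if l \<in> L1 then y l else 0) p"
proof -
  define x' where "x' b l m = (if l \<in> Lb b \<and> m \<in> Mb b l then x b l m else 0)" for b l m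
  define y' where "y' l = (if l \<in> L1 then y l else 0)" for l
  have weighted: "(\<Sum>l\<in>Ls. \<Sum>m\<in>Ms. g l m * x' b l m) = (\<Sum>l\<in>Lb b. \<Sum>m\<in>Mb b l. g l m * x b l m)"
    if "b \<in> B" for b g
  proof -
    have "Lb b \<subseteq> Ls" using L1 Lb that by auto
    then show ?thesis
      using sum_extend_by_zero[OF fin(3,2), of "Lb b" "Mb b" "\<lambda>l m. g l m * x b l m"] Mb that
      unfolding x'_def by (simp add: if_distrib[of "\<lambda>t. _ * t"] cong: if_cong)
  qed
  have per_lot: "(\<Sum>m\<in>Ms. x' b l m) = (if l \<in> Lb b then (\<Sum>m\<in>Mb b l. x b l m) else 0)"
    if "b \<in> B" for b l
  proof (cases "l \<in> Lb b")
    case True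
    then have "{m\<in>Ms. m \<in> Mb b l} = Mb b l" using Mb that by auto
    with True show ?thesis unfolding x'_def using fin(2) by (simp add: sum.inter_filter[symmetric])
  qed (simp add: x'_def)
  have y_sum: "(\<Sum>l\<in>A. y' l) = (\<Sum>l\<in>A \<inter> L1. y l)" if "A \<subseteq> Ls" for A
    using finite_subset[OF that fin(3)] unfolding y'_def by (simp add: sum.inter_restrict)
  from primal have y0: "\<forall>l\<in>L1. y l \<ge> 0"
    and beta_con: "\<forall>b\<in>B. \<forall>l\<in>Lb b. y l - (\<Sum>m\<in>Mb b l. x b l m) \<ge> 0"
    and delta_con: "\<forall>l\<in>L1. (\<Sum>b\<in>{b\<in>B. l \<in> Lb b}. \<Sum>m\<in>Mb b l. x b l m) - y l \<ge> 0"
    unfolding rmp_feasible_def by auto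
  have "y' l - (\<Sum>m\<in>Ms. x' b l m) \<ge> 0" if "b \<in> B" "l \<in> Ls" for b l
    using per_lot[OF that(1)] beta_con y0 that Lb unfolding y'_def by (cases "l \<in> Lb b") auto
  moreover have "(\<Sum>b\<in>B. \<Sum>m\<in>Ms. x' b l m) - y' l \<ge> 0" if "l \<in> Ls" for l
  proof -
    have "(\<Sum>b\<in>B. \<Sum>m\<in>Ms. x' b l m) = (\<Sum>b\<in>{b\<in>B. l \<in> Lb b}. \<Sum>m\<in>Mb b l. x b l m)"
      using fin(1) per_lot by (simp add: sum.inter_filter)
    moreover have "{b\<in>B. l \<in> Lb b} = {}" if "l \<notin> L1" using Lb that by auto
    ultimately show ?thesis using delta_con unfolding y'_def by (cases "l \<in> L1") auto
  qed
  moreover have "Ls \<inter> L1 = L1" "(Ls - L2) \<inter> L1 = L1 - L2" using L1 by auto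
  ultimately show ?thesis
    using primal weighted[of _ "\<lambda>_ _. 1"] weighted[of _ "\<lambda>l m. real m * lsize S l"]
    unfolding mp_feasible_def rmp_feasible_def x'_def[symmetric] y'_def[symmetric]
    by (simp add: y_sum) (auto simp: x'_def y'_def)
qed

section \<open>Feasibility of the lower-bound shift\<close>

lemma neg_part_nonneg: "neg_part t \<ge> 0"
  unfolding neg_part_def by simp

lemma pos_part_nonneg: "pos_part t \<ge> 0"
  unfolding pos_part_def by simp

lemma minus_neg_part_le: "- neg_part t \<le> t"
  unfolding neg_part_def by simp

lemma pos_part_minus_neg_part_le: "t \<le> s \<Longrightarrow> pos_part t - neg_part s \<le> s"
  unfolding pos_part_def neg_part_def by simp

lemma cstar_nonpos: "cstar S Ms L1 Lb c al be de ph ps b \<le> 0"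
  unfolding cstar_def using neg_part_nonneg by simp

lemma cstar_le_cbar:
  assumes "finite (Lb b)" "finite Ms" "l \<in> Lb b" "m \<in> Ms"
  shows "cstar S Ms L1 Lb c al be de ph ps b \<le> cbar S L1 Lb c al be de ph ps b l m"
proof -
  let ?C = "{cbar S L1 Lb c al be de ph ps b l m | l m. l \<in> Lb b \<and> m \<in> Ms}"
  have "?C = (\<lambda>(l, m). cbar S L1 Lb c al be de ph ps b l m) ` (Lb b \<times> Ms)" by auto
  then have "finite ?C" using assms(1,2) by simp
  then have "Min ?C \<le> cbar S L1 Lb c al be de ph ps b l m" using assms(3,4) by (intro Min_le) blast+
  then show ?thesis using assms(3) minus_neg_part_le[of "Min ?C"] unfolding cstar_def by auto
qed

lemma lifted_x_constraint:
  assumes fin: "finite B" "finite L1" "finite Ms" and Lb: "\<forall>b\<in>B. Lb b \<subseteq> L1"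
    and b: "b \<in> B" and m: "m \<in> Ms"
  shows "al b + cstar S Ms L1 Lb c al be de ph ps b - beta_check S Ms L1 Lb c al be de ph ps b l
           + delta_check B S Ms L1 Lb c al be de ph ps l + real m * lsize S l * (ph - ps) \<le> c b l m"
proof -
  let ?cs = "cstar S Ms L1 Lb c al be de ph ps b"
  define cb where "cb = cbar S L1 Lb c al be de ph ps"
  define Mn where "Mn = Min (cb b l ` Ms)"
  have Mn_le: "Mn \<le> cb b l m" unfolding Mn_def using fin(3) m by simp
  have "?cs - beta_check S Ms L1 Lb c al be de ph ps b l + delta_check B S Ms L1 Lb c al be de ph ps l
      \<le> cb b l m - beta_bar Lb be b l + delta_bar L1 de l"
  proof (cases "l \<in> Lb b")
    case True
    then have "l \<in> L1" using Lb b by auto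
    moreover have "finite (Lb b)" using fin(2) Lb b finite_subset by metis
    ultimately show ?thesis using True cstar_le_cbar[of Lb b Ms l m, OF \<open>finite (Lb b)\<close> fin(3) True m]
      unfolding cb_def beta_check_def delta_check_def beta_bar_def delta_bar_def by simp
  next
    case not_in_Lb: False
    have "?cs - neg_part Mn \<le> cb b l m"
      using cstar_nonpos minus_neg_part_le[of Mn] Mn_le by (smt (verit))
    moreover define Ma where "Ma = Min {cb b' l m' | b' m'. b' \<in> B \<and> m' \<in> Ms}"
    have "Ma \<le> Mn"
    proof -
      have "{cb b' l m' | b' m'. b' \<in> B \<and> m' \<in> Ms} = (\<lambda>(b', m'). cb b' l m') ` (B \<times> Ms)" by auto
      then have "finite {cb b' l m' | b' m'. b' \<in> B \<and> m' \<in> Ms}" using fin(1,3) by simp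
      moreover have "Mn \<in> cb b l ` Ms" unfolding Mn_def using fin(3) m by (intro Min_in) auto
      then obtain m' where "m' \<in> Ms" "Mn = cb b l m'" by blast
      ultimately show ?thesis unfolding Ma_def using b by (auto intro!: Min_le)
    qed
    then have "?cs + (pos_part Ma - neg_part Mn) \<le> cb b l m"
      using cstar_nonpos pos_part_minus_neg_part_le[of Ma Mn] Mn_le by (smt (verit))
    ultimately show ?thesis using not_in_Lb
      unfolding beta_check_def delta_check_def beta_bar_def delta_bar_def Mn_def Ma_def cb_def
      by (cases "l \<in> L1") auto
  qed
  then show ?thesis unfolding cb_def cbar_def by simp
qed

lemma dstar_nonpos: "dstar B S Ms Ls L1 L2 Lb c al be ga de mu ph ps \<le> 0"
  unfolding dstar_def Let_def using neg_part_nonneg by simp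

lemma dstar_le_reduced_y_cost:
  assumes "finite Ls" "l \<in> Ls - (\<Inter>b\<in>B. Lb b)"
  shows "dstar B S Ms Ls L1 L2 Lb c al be ga de mu ph ps
         \<le> - (\<Sum>b\<in>B. beta_check S Ms L1 Lb c al be de ph ps b l)
           + delta_check B S Ms L1 Lb c al be de ph ps l + ga - chi L2 l * mu"
  (is "_ \<le> ?r l")
proof -
  have "Min (?r ` (Ls - (\<Inter>b\<in>B. Lb b))) \<le> ?r l" using assms by simp
  then show ?thesis
    using assms(2) minus_neg_part_le[of "Min (?r ` (Ls - (\<Inter>b\<in>B. Lb b)))"]
    unfolding dstar_def Let_def by auto
qed

lemma lifted_y_constraint:
  assumes "finite Ls" "B \<noteq> {}" "\<forall>b\<in>B. Lb b \<subseteq> L1" "l \<in> Ls"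
    and y_con: "\<forall>l\<in>L1. (\<Sum>b\<in>{b\<in>B. l \<in> Lb b}. be b l) - ga - de l + chi L2 l * mu \<le> 0"
  shows "(\<Sum>b\<in>B. beta_check S Ms L1 Lb c al be de ph ps b l)
           - (ga - dstar B S Ms Ls L1 L2 Lb c al be ga de mu ph ps)
           - delta_check B S Ms L1 Lb c al be de ph ps l + chi L2 l * mu \<le> 0"
proof (cases "l \<in> (\<Inter>b\<in>B. Lb b)")
  case True
  text \<open>A lot-type available to every branch is in L1, and its y-constraint is the DRMP one.\<close>
  then have "l \<in> L1" "{b\<in>B. l \<in> Lb b} = B" using assms(2,3) by auto
  moreover have "(\<Sum>b\<in>B. beta_check S Ms L1 Lb c al be de ph ps b l) = (\<Sum>b\<in>B. be b l)"
    using True unfolding beta_check_def by simp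
  moreover have "delta_check B S Ms L1 Lb c al be de ph ps l = de l"
    using \<open>l \<in> L1\<close> unfolding delta_check_def by simp
  ultimately show ?thesis
    using y_con dstar_nonpos[of B S Ms Ls L1 L2 Lb c al be ga de mu ph ps] by fastforce
next
  case False
  with assms(4) have "l \<in> Ls - (\<Inter>b\<in>B. Lb b)" by blast
  then have "dstar B S Ms Ls L1 L2 Lb c al be ga de mu ph ps
      \<le> - (\<Sum>b\<in>B. beta_check S Ms L1 Lb c al be de ph ps b l)
        + delta_check B S Ms L1 Lb c al be de ph ps l + ga - chi L2 l * mu"
    by (rule dstar_le_reduced_y_cost[OF assms(1)])
  then show ?thesis by linarith
qed

lemma dmp_obj_le_mp_value:
  assumes "finite B" "finite Ls" "mp_feasible B S Ms Ls L2 k Ilo Ihi x y p"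
    and "dmp_feasible B S Ms Ls L2 c P al be ga de mu ph ps"
  shows "dmp_obj B k Ilo Ihi al ga mu ph ps \<le> mp_value B S Ms Ls L2 c k Ilo Ihi P"
  unfolding mp_value_def
proof (rule cInf_greatest)
  show "{mp_obj B Ms Ls c P x y p | x y p. mp_feasible B S Ms Ls L2 k Ilo Ihi x y p} \<noteq> {}"
    using assms(3) by blast
qed (use assms mp_dmp_weak_duality in blast)

lemma lower_bound_shift_dmp_feasible:
  assumes B: "finite B" "B \<noteq> {}" and Ms: "finite Ms" and Ls: "finite Ls"
    and L1: "L1 \<subseteq> Ls" and Lb: "\<forall>b\<in>B. Lb b \<subseteq> L1"
    and dual: "drmp_feasible B S L1 L2 Lb Mb c P al be ga de mu ph ps"
  shows "dmp_feasible B S Ms Ls L2 c P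
           (\<lambda>b. al b + cstar S Ms L1 Lb c al be de ph ps b) (beta_check S Ms L1 Lb c al be de ph ps)
           (ga - dstar B S Ms Ls L1 L2 Lb c al be ga de mu ph ps)
           (delta_check B S Ms L1 Lb c al be de ph ps) mu ph ps"
proof -
  from dual have "\<forall>b\<in>B. \<forall>l\<in>Lb b. be b l \<ge> 0" "ga \<ge> 0" "\<forall>l\<in>L1. de l \<ge> 0"
    "mu \<ge> 0" "ph \<ge> 0" "ps \<ge> 0" "mu \<le> P"
    and y_con: "\<forall>l\<in>L1. (\<Sum>b\<in>{b\<in>B. l \<in> Lb b}. be b l) - ga - de l + chi L2 l * mu \<le> 0"
    unfolding drmp_feasible_def by auto
  moreover have "finite L1" using L1 Ls finite_subset by blast
  ultimately show ?thesis
    unfolding dmp_feasible_def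
    using lifted_x_constraint[OF B(1) _ Ms Lb] lifted_y_constraint[OF Ls B(2) Lb _ y_con]
      dstar_nonpos[of B S Ms Ls L1 L2 Lb c al be ga de mu ph ps] neg_part_nonneg pos_part_nonneg
    by (auto simp: beta_check_def delta_check_def)
qed

theorem theorem2:
  fixes B :: "'b set" and S :: "'s set" and Ms :: "nat set"
    and Ls L1 L2 :: "('s \<Rightarrow> nat) set"
    and Lb :: "'b \<Rightarrow> ('s \<Rightarrow> nat) set" and Mb :: "'b \<Rightarrow> ('s \<Rightarrow> nat) \<Rightarrow> nat set"
    and c :: "'b \<Rightarrow> ('s \<Rightarrow> nat) \<Rightarrow> nat \<Rightarrow> real"
    and k :: nat and Ilo Ihi P :: real
    and x :: "'b \<Rightarrow> ('s \<Rightarrow> nat) \<Rightarrow> nat \<Rightarrow> real" and y :: "('s \<Rightarrow> nat) \<Rightarrow> real" and p :: real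
    and al :: "'b \<Rightarrow> real" and be :: "'b \<Rightarrow> ('s \<Rightarrow> nat) \<Rightarrow> real" and ga :: real
    and de :: "('s \<Rightarrow> nat) \<Rightarrow> real" and mu ph ps :: real
  assumes B: "finite B" "B \<noteq> {}"
    and S: "finite S" "S \<noteq> {}"
    and Ms: "finite Ms" "Ms \<noteq> {}"
    and Ls: "finite Ls" "Ls \<noteq> {}" "\<forall>l\<in>Ls. \<forall>s. s \<notin> S \<longrightarrow> l s = 0"
    and c_nonneg: "\<forall>b\<in>B. \<forall>l\<in>Ls. \<forall>m\<in>Ms. c b l m \<ge> 0"
    and I: "Ilo \<le> Ihi" and P: "P > 0"
    and L12: "L2 \<subseteq> L1" "L1 \<subseteq> Ls"
    and Lb: "\<forall>b\<in>B. Lb b \<subseteq> L1"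
    and Mb: "\<forall>b\<in>B. \<forall>l\<in>Lb b. Mb b l \<subseteq> Ms \<and> Mb b l \<noteq> {}"
    and primal_opt: "rmp_optimal B S L1 L2 Lb Mb c k Ilo Ihi P x y p"
    and dual_opt: "drmp_optimal B S L1 L2 Lb Mb c k Ilo Ihi P al be ga de mu ph ps"
  defines "cs \<equiv> cstar S Ms L1 Lb c al be de ph ps"
    and "ds \<equiv> dstar B S Ms Ls L1 L2 Lb c al be ga de mu ph ps"
    and "zRMP \<equiv> rmp_obj B Lb Mb c P x y p"
  shows "dmp_feasible B S Ms Ls L2 c P
           (\<lambda>b. al b + cs b) (beta_check S Ms L1 Lb c al be de ph ps) (ga - ds)
           (delta_check B S Ms L1 Lb c al be de ph ps) mu ph ps
       \<and> dmp_obj B k Ilo Ihi (\<lambda>b. al b + cs b) (ga - ds) mu ph ps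
           = zRMP + (\<Sum>b\<in>B. cs b) + real k * ds
       \<and> mp_value B S Ms Ls L2 c k Ilo Ihi P \<ge> zRMP + (\<Sum>b\<in>B. cs b) + real k * ds"
proof -
  have L1: "finite L1" using L12(2) Ls(1) finite_subset by blast
  have Mb_fin: "\<forall>b\<in>B. \<forall>l\<in>Lb b. finite (Mb b l)" using Mb Ms(1) finite_subset by blast
  have primal: "rmp_feasible B S L1 L2 Lb Mb k Ilo Ihi x y p"
    and dual: "drmp_feasible B S L1 L2 Lb Mb c P al be ga de mu ph ps"
    using primal_opt dual_opt unfolding rmp_optimal_def drmp_optimal_def by auto
  have feasible: "dmp_feasible B S Ms Ls L2 c P
           (\<lambda>b. al b + cs b) (beta_check S Ms L1 Lb c al be de ph ps) (ga - ds)
           (delta_check B S Ms L1 Lb c al be de ph ps) mu ph ps"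
    unfolding cs_def ds_def by (rule lower_bound_shift_dmp_feasible[OF B Ms(1) Ls(1) L12(2) Lb dual])
  have "zRMP = dmp_obj B k Ilo Ihi al ga mu ph ps"
    unfolding zRMP_def by (rule rmp_drmp_strong_duality[OF B(1) L1 Lb Mb_fin primal_opt dual_opt])
  then have objective: "dmp_obj B k Ilo Ihi (\<lambda>b. al b + cs b) (ga - ds) mu ph ps
      = zRMP + (\<Sum>b\<in>B. cs b) + real k * ds"
    unfolding dmp_obj_def by (simp add: sum.distrib algebra_simps)
  have "\<forall>b\<in>B. \<forall>l\<in>Lb b. Mb b l \<subseteq> Ms" using Mb by blast
  with primal have "mp_feasible B S Ms Ls L2 k Ilo Ihi
      (\<lambda>b l m. if l \<in> Lb b \<and> m \<in> Mb b l then x b l m else 0) (\<lambda>l. if l \<in> L1 then y l else 0) p"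
    using mp_feasible_zero_extension[OF B(1) Ms(1) Ls(1) L12(2) Lb] by blast
  then have "dmp_obj B k Ilo Ihi (\<lambda>b. al b + cs b) (ga - ds) mu ph ps \<le> mp_value B S Ms Ls L2 c k Ilo Ihi P"
    using dmp_obj_le_mp_value[OF B(1) Ls(1) _ feasible] by blast
  with feasible objective show ?thesis by simp
qed

end
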